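(* Let $(V,\omega)$ be a $2n$-dimensional real symplectic space, $L_1,L_2,L_3\in\Lambda(V,\omega)$, $\psi:[0,T]\to\mathrm{Sp}(V,\omega)$ of class $\mathscr C^1$ with $\psi(0)=\mathrm{Id}$, and $\ell_i(t)=\psi(t)L_i$ for $i=1,2$. Assume: (1) $\ell_2$ is an $L_3$-plus curve; (2) $\iota(L_1,L_2,L_3)=n-\dim(L_1\cap L_2)$; (3) $\ell_1(t)\cap L_3=\{0\}$ for every $t\in[0,T]$. Then $\ell_2(t)\cap L_3=\{0\}$ for every $t\in[0,T]$.
   Context: $\Lambda(V,\omega)$ is the Lagrangian Grassmannian of $(V,\omega)$. For $L_0\in\Lambda(V,\omega)$ and a $\mathscr C^1$ path $\ell$ in $\Lambda(V,\omega)$, a crossing is an instant $t_0$ with $\ell(t_0)\cap L_0\ne\{0\}$; the crossing form on $\ell(t_0)\cap L_0$ is $\Gamma(\ell,L_0,t_0)[v]=\frac{d}{dt}|_{t=t_0}\omega(v,w(t))$ with $w(t)$ the unique vector in a fixed Lagrangian $W$ transversal to $\ell(t_0)$ such that $v+w(t)\in\ell(t)$. The curve $\ell$ is an $L_0$-plus curve if at each crossing the crossing form is positive definite. Triple index: for $\alpha,\beta,\gamma\in\Lambda(V,\omega)$ let $Q(\alpha,\beta;\gamma)$ be the quadratic form on $\alpha\cap(\beta+\gamma)$ given by $Q(\alpha,\beta;\gamma)(x)=\omega(y,z)$ where $x=y+z$ with $y\in\beta$, $z\in\gamma$ (independent of the decomposition); then $\iota(\alpha,\beta,\gamma)=n_+\big(Q(\alpha,\beta;\gamma)\big)+\dim(\alpha\cap\gamma)-\dim(\alpha\cap\beta\cap\gamma)$,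 where $n_+$ is the positive inertia index. *)

theory Defs
  imports "HOL-Analysis.Analysis"
begin

definition symplectic_form :: "('v::euclidean_space \<Rightarrow> 'v \<Rightarrow> real) \<Rightarrow> bool" where
  "symplectic_form \<omega> \<longleftrightarrow>
     (\<forall>x. linear (\<omega> x)) \<and> (\<forall>y. linear (\<lambda>x. \<omega> x y)) \<and>
     (\<forall>x y. \<omega> x y = - \<omega> y x) \<and>
     (\<forall>x. (\<forall>y. \<omega> x y = 0) \<longrightarrow> x = 0)"

definition symp_orth :: "('v::euclidean_space \<Rightarrow> 'v \<Rightarrow> real) \<Rightarrow> 'v set \<Rightarrow> 'v set" where
  "symp_orth \<omega> L = {x. \<forall>y\<in>L. \<omega> x y = 0}"

definition lagrangian :: "('v::euclidean_space \<Rightarrow> 'v \<Rightarrow> real) \<Rightarrow> 'v set \<Rightarrow> bool" where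
  "lagrangian \<omega> L \<longleftrightarrow> subspace L \<and> L = symp_orth \<omega> L"

definition symplectic_map :: "('v::euclidean_space \<Rightarrow> 'v \<Rightarrow> real) \<Rightarrow> ('v \<Rightarrow> 'v) \<Rightarrow> bool" where
  "symplectic_map \<omega> A \<longleftrightarrow> linear A \<and> bij A \<and> (\<forall>x y. \<omega> (A x) (A y) = \<omega> x y)"

text \<open>A path of linear maps is C^1 on I (for finite dimension equivalently: each
t \<mapsto> A t v is C^1, i.e. the matrix entries are C^1).\<close>

definition C1_path_on :: "real set \<Rightarrow> (real \<Rightarrow> 'v::euclidean_space \<Rightarrow> 'v) \<Rightarrow> bool" where
  "C1_path_on I A \<longleftrightarrow>
     (\<exists>A'. (\<forall>t\<in>I. \<forall>v. ((\<lambda>s. A s v) has_vector_derivative A' t v) (at t within I)) \<and>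
           (\<forall>v. continuous_on I (\<lambda>t. A' t v)))"

text \<open>Crossing form: for v in l(t0) \<inter> L0, w(t) is the unique vector of a fixed Lagrangian W
transversal to l(t0) with v + w(t) \<in> l(t); Gamma[v] = d/dt omega(v, w(t)) at t0.\<close>

definition crossing_vec ::
  "'v::euclidean_space set \<Rightarrow> (real \<Rightarrow> 'v set) \<Rightarrow> 'v \<Rightarrow> real \<Rightarrow> 'v" where
  "crossing_vec W l v t = (THE w. w \<in> W \<and> v + w \<in> l t)"

definition plus_curve ::
  "('v::euclidean_space \<Rightarrow> 'v \<Rightarrow> real) \<Rightarrow> 'v set \<Rightarrow> real set \<Rightarrow> (real \<Rightarrow> 'v set) \<Rightarrow> bool" where
  "plus_curve \<omega> L0 I l \<longleftrightarrow>
     (\<forall>t0\<in>I. l t0 \<inter> L0 \<noteq> {0} \<longrightarrow>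
        (\<exists>W. lagrangian \<omega> W \<and> W \<inter> l t0 = {0} \<and>
           (\<forall>v\<in>l t0 \<inter> L0. v \<noteq> 0 \<longrightarrow>
              (\<exists>D>0. ((\<lambda>t. \<omega> v (crossing_vec W l v t)) has_real_derivative D) (at t0 within I)))))"

definition Qform ::
  "('v::euclidean_space \<Rightarrow> 'v \<Rightarrow> real) \<Rightarrow> 'v set \<Rightarrow> 'v set \<Rightarrow> 'v \<Rightarrow> real" where
  "Qform \<omega> \<beta> \<gamma> x = (let p = (SOME p. fst p \<in> \<beta> \<and> snd p \<in> \<gamma> \<and> x = fst p + snd p)
                      in \<omega> (fst p) (snd p))"

definition pos_inertia :: "('v::euclidean_space \<Rightarrow> real) \<Rightarrow> 'v set \<Rightarrow> nat" where
  "pos_inertia Q S = Max {dim U | U. subspace U \<and> U \<subseteq> S \<and> (\<forall>x\<in>U. x \<noteq> 0 \<longrightarrow> Q x > 0)}"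

definition triple_index ::
  "('v::euclidean_space \<Rightarrow> 'v \<Rightarrow> real) \<Rightarrow> 'v set \<Rightarrow> 'v set \<Rightarrow> 'v set \<Rightarrow> nat" where
  "triple_index \<omega> \<alpha> \<beta> \<gamma> =
     pos_inertia (Qform \<omega> \<beta> \<gamma>) (\<alpha> \<inter> (\<beta> + \<gamma>)) + dim (\<alpha> \<inter> \<gamma>) - dim (\<alpha> \<inter> \<beta> \<inter> \<gamma>)"

end

theory Submission
  imports Defs
begin

text \<open>Call the configuration at time t positive if \<open>\<psi> t y = \<psi> t x + m\<close> with \<open>x \<in> L1\<close>,
  \<open>y \<in> L2\<close>, \<open>m \<in> L3\<close> and \<open>\<omega> m (\<psi> t x) \<le> 0\<close> forces \<open>m = 0\<close>; taking \<open>x = 0\<close> shows that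
  \<open>\<psi> t L2 \<inter> L3 = {0}\<close> then. The index condition says that Q(L2; L3) is positive definite on a
  complement of \<open>L1 \<inter> L2\<close> in L1, which makes the configuration positive at 0. Since L1 stays
  transversal to L3, positivity is open along the path. It is also closed from the left: at the
  first time s where it fails, the form is only semidefinite, and a null direction produces a
  crossing \<open>v \<in> \<psi> s L2 \<inter> L3\<close>. As the crossing form is positive, the crossing vector of v at
  times t slightly below s has \<open>\<omega>\<close>-value of order \<open>t - s < 0\<close>, and perturbing it into
  \<open>\<psi> t L1 + L3\<close> gives a decomposition with negative value, contradicting positivity at t.\<close>

section \<open>Symplectic linear algebra\<close>

lemma lagrangian_subspace: "lagrangian \<omega> L \<Longrightarrow> subspace L"
  by (simp add: lagrangian_def)

lemma lagrangian_isotropic: "lagrangian \<omega> L \<Longrightarrow> x \<in> L \<Longrightarrow> y \<in> L \<Longrightarrow> \<omega> x y = 0"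
  unfolding lagrangian_def symp_orth_def by blast

lemma lagrangian_maximal: "lagrangian \<omega> L \<Longrightarrow> (\<And>y. y \<in> L \<Longrightarrow> \<omega> x y = 0) \<Longrightarrow> x \<in> L"
  unfolding lagrangian_def symp_orth_def by blast

lemma symplectic_map_linear: "symplectic_map \<omega> A \<Longrightarrow> linear A"
  and symplectic_map_inj: "symplectic_map \<omega> A \<Longrightarrow> inj A"
  and symplectic_map_preserves: "symplectic_map \<omega> A \<Longrightarrow> \<omega> (A x) (A y) = \<omega> x y"
  unfolding symplectic_map_def by (auto simp: bij_is_inj)

text \<open>Writing \<open>x = y + (- m)\<close>, the value \<open>\<omega> m x\<close> is \<open>Qform \<omega> B C x\<close>: thus
  \<open>triple_positive \<omega> A B C\<close> says that Q(B; C) is positive on \<open>A \<inter> (B + C)\<close> outside \<open>A \<inter> B\<close>.\<close>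

definition triple_positive :: "('v::euclidean_space \<Rightarrow> 'v \<Rightarrow> real) \<Rightarrow> 'v set \<Rightarrow> 'v set \<Rightarrow> 'v set \<Rightarrow> bool"
  where "triple_positive \<omega> A B C \<longleftrightarrow>
    (\<forall>x\<in>A. \<forall>y\<in>B. \<forall>m\<in>C. y = x + m \<longrightarrow> \<omega> m x \<le> 0 \<longrightarrow> m = 0)"

definition triple_nonneg :: "('v::euclidean_space \<Rightarrow> 'v \<Rightarrow> real) \<Rightarrow> 'v set \<Rightarrow> 'v set \<Rightarrow> 'v set \<Rightarrow> bool"
  where "triple_nonneg \<omega> A B C \<longleftrightarrow> (\<forall>x\<in>A. \<forall>y\<in>B. \<forall>m\<in>C. y = x + m \<longrightarrow> 0 \<le> \<omega> m x)"

lemma nonneg_quadratic_imp_linear_coeff_zero: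
  fixes a b :: real
  assumes "\<And>c. 0 \<le> c * a + c * c * b"
  shows "a = 0"
proof (rule ccontr)
  assume "a \<noteq> 0"
  define k where "k = \<bar>b\<bar> + 1"
  have "k > 0" "b \<le> k"
    unfolding k_def by auto
  define c where "c = - a / (2 * k)"
  have "c * c * b \<le> c * c * k"
    using \<open>b \<le> k\<close> by (intro mult_left_mono) auto
  moreover have "c * a + c * c * k = - (a * a) / (4 * k)"
    unfolding c_def using \<open>k > 0\<close> by (simp add: field_simps)
  moreover have "0 < a * a"
    using \<open>a \<noteq> 0\<close> by (auto simp: zero_less_mult_iff linorder_neq_iff)
  then have "0 < a * a / (4 * k)"
    using \<open>k > 0\<close> by simp
  ultimately show False
    using assms[of c] by linarith
qed

lemma pos_inertia_witness:
  fixes Q :: "'v::euclidean_space \<Rightarrow> real"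
  assumes "0 \<in> S"
  obtains U where "subspace U" "U \<subseteq> S" "\<And>x. x \<in> U \<Longrightarrow> x \<noteq> 0 \<Longrightarrow> Q x > 0"
    "dim U = pos_inertia Q S"
proof -
  let ?D = "{dim U | U. subspace U \<and> U \<subseteq> S \<and> (\<forall>x\<in>U. x \<noteq> 0 \<longrightarrow> Q x > 0)}"
  have "?D \<subseteq> {..DIM('v)}"
    using dim_subset_UNIV by auto
  then have "finite ?D"
    by (rule finite_subset) simp
  moreover have "dim {0::'v} \<in> ?D"
    using assms by (intro CollectI exI[of _ "{0::'v}"]) simp
  ultimately have "Max ?D \<in> ?D"
    by (intro Max_in) auto
  then show ?thesis
    using that unfolding pos_inertia_def by auto
qed

lemma dim_add_le_if_inter_zero:
  fixes U N S :: "'v::euclidean_space set"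
  assumes "subspace U" "subspace N" "U \<inter> N = {0}" "subspace S" "U \<subseteq> S" "N \<subseteq> S"
  shows "dim U + dim N \<le> dim S"
proof -
  have "dim {a + b |a b. a \<in> U \<and> b \<in> N} + dim (U \<inter> N) = dim U + dim N"
    by (rule dim_sums_Int[OF assms(1,2)])
  moreover have "{a + b |a b. a \<in> U \<and> b \<in> N} \<subseteq> S"
    using assms by (auto intro: subspace_add)
  then have "dim {a + b |a b. a \<in> U \<and> b \<in> N} \<le> dim S"
    by (rule dim_subset)
  ultimately show ?thesis
    using assms(3) by simp
qed

lemma crossing_vec_unique:
  assumes "subspace W" "subspace (l t)" "W \<inter> l t = {0}" "w \<in> W" "v + w \<in> l t"
  shows "crossing_vec W l v t = w"
  unfolding crossing_vec_def
proof (rule the_equality)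
  fix w' assume w': "w' \<in> W \<and> v + w' \<in> l t"
  have "(v + w') - (v + w) \<in> l t"
    using subspace_diff[OF assms(2), of "v + w'" "v + w"] w' assms(5) by blast
  moreover have "(v + w') - (v + w) = w' - w"
    by simp
  moreover have "w' - w \<in> W"
    using w' assms(1,4) by (simp add: subspace_diff)
  ultimately have "w' - w \<in> W \<inter> l t"
    by simp
  then show "w' = w"
    using assms(3) by simp
qed (use assms in simp)

lemma image_inter_zero_imp_sum_zero:
  assumes "linear f" "inj f" "subspace B" "f ` A \<inter> B = {0}"
    and "x \<in> A" "b \<in> B" "f x + b = 0"
  shows "x = 0 \<and> b = 0"
proof -
  have "f x = - b"
    using assms(7) by (simp add: eq_neg_iff_add_eq_0)
  moreover have "f x \<in> f ` A"
    using assms(5) by (rule imageI)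
  ultimately have "f x \<in> f ` A \<inter> B"
    using subspace_neg[OF assms(3,6)] by simp
  then have "f x = 0"
    using assms(4) by blast
  then have "x = 0"
    using assms(1,2) linear_0 by (metis injD)
  then show ?thesis
    using assms(1,7) linear_0 by fastforce
qed

lemma sum_bound_imp_image_inter_zero:
  assumes "subspace B" "\<forall>x\<in>A. \<forall>b\<in>B. norm x + norm b \<le> C * norm (f x + b)"
  shows "f ` A \<inter> B \<subseteq> {0}"
proof
  fix u assume "u \<in> f ` A \<inter> B"
  then obtain x where "x \<in> A" "- u \<in> B" "u = f x"
    using assms(1) by (auto simp: subspace_neg)
  then have "norm x + norm (- u) \<le> 0"
    using assms(2) by fastforce
  then have "norm x + norm u \<le> 0"
    by simp
  then have "norm u = 0"
    using norm_ge_zero[of x] norm_ge_zero[of u] by linarith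
  then show "u \<in> {0}"
    by simp
qed

locale symplectic_space =
  fixes \<omega> :: "'v::euclidean_space \<Rightarrow> 'v \<Rightarrow> real"
  assumes symplectic: "symplectic_form \<omega>"
begin

lemma bilinear: "bilinear \<omega>"
  using symplectic unfolding symplectic_form_def bilinear_def by blast

sublocale form: bounded_bilinear \<omega>
  using bilinear bilinear_conv_bounded_bilinear by blast

lemma skew: "\<omega> x y = - \<omega> y x"
  using symplectic unfolding symplectic_form_def by blast

lemma self_zero [simp]: "\<omega> x x = 0"
  using skew[of x x] by simp

lemma nondegenerate: "(\<And>y. \<omega> x y = 0) \<Longrightarrow> x = 0"
  using symplectic unfolding symplectic_form_def by blast

lemma dim_symp_orth:
  assumes "subspace L"
  shows "dim (symp_orth \<omega> L) + dim L = DIM('v)"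
proof -
  define J where "J y = (\<Sum>i\<in>Basis. \<omega> i y *\<^sub>R i)" for y
  have inner_J: "x \<bullet> J y = \<omega> x y" for x y
  proof -
    have "x \<bullet> J y = (\<Sum>i\<in>Basis. \<omega> i y * (x \<bullet> i))"
      by (simp add: J_def inner_sum_right)
    also have "\<dots> = \<omega> (\<Sum>i\<in>Basis. (x \<bullet> i) *\<^sub>R i) y"
      by (simp add: form.sum_left form.scaleR_left mult.commute)
    finally show ?thesis
      by (simp add: euclidean_representation)
  qed
  have "linear J"
    unfolding J_def
    by (intro linearI) (auto simp: form.add_right form.scaleR_right sum.distrib scaleR_add_left scaleR_sum_right)
  moreover have "inj J"
  proof (rule injI)
    fix a b assume "J a = J b"
    then have "\<omega> (a - b) x = 0" for x
      using inner_J[of x a] inner_J[of x b] skew[of "a - b" x] by (simp add: form.diff_right)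
    then show "a = b"
      using nondegenerate[of "a - b"] by simp
  qed
  ultimately have "dim (J ` L) = dim L"
    using dim_image_eq inj_on_subset subset_UNIV by metis
  moreover have "symp_orth \<omega> L = {y \<in> UNIV. \<forall>x\<in>J ` L. orthogonal x y}"
    unfolding symp_orth_def orthogonal_def by (auto simp: inner_J[symmetric] inner_commute)
  moreover have "dim {y \<in> UNIV. \<forall>x\<in>J ` L. orthogonal x y} + dim (J ` L) = dim (UNIV :: 'v set)"
    using \<open>linear J\<close> assms
    by (intro dim_subspace_orthogonal_to_vectors linear_subspace_image) auto
  ultimately show ?thesis
    by simp
qed

lemma dim_lagrangian: "lagrangian \<omega> L \<Longrightarrow> 2 * dim L = DIM('v)"
  using dim_symp_orth[of L] unfolding lagrangian_def by auto

lemma lagrangian_image: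
  assumes A: "symplectic_map \<omega> A" and L: "lagrangian \<omega> L"
  shows "lagrangian \<omega> (A ` L)"
  unfolding lagrangian_def
proof
  show "subspace (A ` L)"
    using A L by (intro linear_subspace_image symplectic_map_linear lagrangian_subspace)
  have "x \<in> A ` L" if "x \<in> symp_orth \<omega> (A ` L)" for x
  proof -
    obtain z where z: "x = A z"
      using A unfolding symplectic_map_def by (metis bij_pointE)
    have "\<omega> z y = 0" if "y \<in> L" for y
      using \<open>x \<in> symp_orth \<omega> (A ` L)\<close> that symplectic_map_preserves[OF A, of z y] z
      unfolding symp_orth_def by auto
    then show ?thesis
      using lagrangian_maximal[OF L] z by blast
  qed
  then show "A ` L = symp_orth \<omega> (A ` L)"
    using lagrangian_isotropic[OF L] symplectic_map_preserves[OF A]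
    unfolding symp_orth_def by auto
qed

lemma lagrangian_transversal_decomp:
  assumes A: "lagrangian \<omega> A" and B: "lagrangian \<omega> B" and AB: "A \<inter> B = {0}"
  obtains a b where "a \<in> A" "b \<in> B" "z = a + b"
proof -
  let ?S = "{x + y |x y. x \<in> A \<and> y \<in> B}"
  have sA: "subspace A" and sB: "subspace B"
    using A B lagrangian_subspace by auto
  have "dim ?S + dim (A \<inter> B) = dim A + dim B"
    by (rule dim_sums_Int[OF sA sB])
  then have "dim ?S = DIM('v)"
    using AB dim_lagrangian[OF A] dim_lagrangian[OF B] by simp
  then have "span ?S = UNIV"
    using dim_eq_full by blast
  moreover have "span ?S = ?S"
    using subspace_sums[OF sA sB] by (simp add: span_eq_iff)
  ultimately show ?thesis
    using that by auto
qed

lemma Qform_eq: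
  assumes B: "lagrangian \<omega> B" and C: "lagrangian \<omega> C" and y: "y \<in> B" and z: "z \<in> C"
  shows "Qform \<omega> B C (y + z) = \<omega> y z"
proof -
  define p where "p = (SOME p. fst p \<in> B \<and> snd p \<in> C \<and> y + z = fst p + snd p)"
  have p: "fst p \<in> B" "snd p \<in> C" "y + z = fst p + snd p"
    unfolding p_def by (rule someI2[of _ "(y, z)"]; use y z in simp)+
  define d where "d = fst p - y"
  have "d \<in> B"
    unfolding d_def using p(1) y lagrangian_subspace[OF B] by (simp add: subspace_diff)
  moreover have "d = z - snd p"
    unfolding d_def using p(3) by (simp add: algebra_simps)
  then have "d \<in> C"
    using p(2) z lagrangian_subspace[OF C] by (simp add: subspace_diff)
  moreover have "fst p = y + d" "snd p = z - d"
    using \<open>d = z - snd p\<close> unfolding d_def by (simp_all add: algebra_simps)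
  then have "\<omega> (fst p) (snd p) = \<omega> y z - \<omega> y d + \<omega> d z - \<omega> d d"
    by (simp add: form.add_left form.diff_right)
  ultimately have "\<omega> (fst p) (snd p) = \<omega> y z"
    using lagrangian_isotropic[OF B y] lagrangian_isotropic[OF C _ z] by simp
  then show ?thesis
    unfolding Qform_def p_def[symmetric] by (simp add: Let_def)
qed

lemma crossing_vec_mem:
  assumes W: "lagrangian \<omega> W" and L: "lagrangian \<omega> (l t)" and WL: "W \<inter> l t = {0}"
  shows "crossing_vec W l v t \<in> W \<and> v + crossing_vec W l v t \<in> l t"
proof -
  have "l t \<inter> W = {0}"
    using WL by (simp add: Int_commute)
  then obtain a w where "a \<in> l t" "w \<in> W" "- v = a + w"
    by (rule lagrangian_transversal_decomp[OF L W])
  have "v + w = - (- v) + w"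
    by simp
  also have "\<dots> = - a"
    using \<open>- v = a + w\<close> by simp
  finally have "v + w = - a" .
  then have "v + w \<in> l t"
    using lagrangian_subspace[OF L] \<open>a \<in> l t\<close> by (simp add: subspace_neg)
  then show ?thesis
    using crossing_vec_unique[of W l t w v] lagrangian_subspace[OF W] lagrangian_subspace[OF L] WL
      \<open>w \<in> W\<close> by simp
qed

lemma triple_positive_imp_transversal:
  assumes "triple_positive \<omega> A B C" "subspace A" "subspace B" "subspace C"
  shows "B \<inter> C = {0}"
  using assms subspace_0[of A] subspace_0[of B] subspace_0[of C]
  unfolding triple_positive_def by (fastforce simp: form.zero_right)

lemma triple_nonneg_zero_imp_mem:
  assumes A: "lagrangian \<omega> A" and B: "lagrangian \<omega> B" and C: "lagrangian \<omega> C"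
    and AC: "A \<inter> C = {0}" and nonneg: "triple_nonneg \<omega> A B C"
    and x0: "x0 \<in> A" and m0: "m0 \<in> C" and y0: "x0 + m0 \<in> B" and zero: "\<omega> m0 x0 = 0"
  shows "m0 \<in> B"
proof (rule lagrangian_maximal[OF B])
  fix u assume u: "u \<in> B"
  obtain x m where x: "x \<in> A" and m: "m \<in> C" and u_eq: "u = x + m"
    using lagrangian_transversal_decomp[OF A C AC] .
  \<comment> \<open>Along the line \<open>(x0 + c x) + (m0 + c m)\<close> in B the form is a nonnegative quadratic in c vanishing at 0.\<close>
  have "0 \<le> c * (\<omega> m0 x + \<omega> m x0) + c * c * \<omega> m x" for c
  proof -
    have "x0 + c *\<^sub>R x \<in> A" "m0 + c *\<^sub>R m \<in> C"
      using x0 x m0 m lagrangian_subspace[OF A] lagrangian_subspace[OF C]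
      by (simp_all add: subspace_add subspace_scale)
    moreover have "(x0 + m0) + c *\<^sub>R u \<in> B"
      using lagrangian_subspace[OF B] y0 u by (simp add: subspace_add subspace_scale)
    moreover have "(x0 + m0) + c *\<^sub>R u = (x0 + c *\<^sub>R x) + (m0 + c *\<^sub>R m)"
      unfolding u_eq by (simp add: algebra_simps)
    ultimately have "0 \<le> \<omega> (m0 + c *\<^sub>R m) (x0 + c *\<^sub>R x)"
      using nonneg unfolding triple_nonneg_def by auto
    then show ?thesis
      using zero by (simp add: form.add_left form.add_right form.scaleR_left form.scaleR_right
          algebra_simps)
  qed
  then have "\<omega> m0 x + \<omega> m x0 = 0"
    by (rule nonneg_quadratic_imp_linear_coeff_zero)
  moreover have "\<omega> (x0 + m0) u = 0"
    using lagrangian_isotropic[OF B y0 u] .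
  then have "\<omega> x0 m + \<omega> m0 x = 0"
    using lagrangian_isotropic[OF A x0 x] lagrangian_isotropic[OF C m0 m] u_eq
    by (simp add: form.add_left form.add_right)
  ultimately have "\<omega> m0 x = 0"
    using skew[of x0 m] by linarith
  then show "\<omega> m0 u = 0"
    using u_eq lagrangian_isotropic[OF C m0 m] by (simp add: form.add_right)
qed

lemma Qform_nonpos_on_span:
  assumes A: "lagrangian \<omega> A" and B: "lagrangian \<omega> B" and C: "lagrangian \<omega> C"
    and x: "x \<in> A" and m: "m \<in> C" and y: "x + m \<in> B" and nonpos: "\<omega> m x \<le> 0"
    and z: "z \<in> span (insert x (A \<inter> B))"
  shows "Qform \<omega> B C z \<le> 0"
proof -
  \<comment> \<open>Q z is \<open>c\<^sup>2 \<omega> m x\<close>, where c is the coefficient of x in z.\<close>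
  have sB: "subspace B" and sC: "subspace C"
    using B C by (auto intro: lagrangian_subspace)
  have span_K: "span (A \<inter> B) = A \<inter> B"
    using A B by (simp add: lagrangian_subspace subspace_inter)
  obtain c where "z - c *\<^sub>R x \<in> span (A \<inter> B)"
    using z unfolding span_insert by auto
  define k where "k = z - c *\<^sub>R x"
  have k: "k \<in> A" "k \<in> B"
    using \<open>z - c *\<^sub>R x \<in> span (A \<inter> B)\<close> span_K unfolding k_def by auto
  have "k + c *\<^sub>R (x + m) \<in> B" "- c *\<^sub>R m \<in> C"
    using k(2) y m sB sC by (simp_all add: subspace_add subspace_scale subspace_neg)
  moreover have z_eq: "z = (k + c *\<^sub>R (x + m)) + - c *\<^sub>R m"
    unfolding k_def by (simp add: algebra_simps)
  ultimately have "Qform \<omega> B C z = \<omega> (k + c *\<^sub>R (x + m)) (- c *\<^sub>R m)"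
    by (subst z_eq, intro Qform_eq[OF B C])
  moreover have "\<omega> k m = 0"
    using lagrangian_isotropic[OF A k(1) x] lagrangian_isotropic[OF B k(2) y]
    by (simp add: form.add_right)
  ultimately have "Qform \<omega> B C z = c * c * \<omega> m x"
    using skew[of x m] by (simp add: form.add_left form.add_right form.minus_right form.scaleR_left
        form.scaleR_right)
  then show ?thesis
    using nonpos by (simp add: mult_nonneg_nonpos)
qed

lemma Qform_nonpos_imp_mem:
  assumes A: "lagrangian \<omega> A" and B: "lagrangian \<omega> B" and C: "lagrangian \<omega> C"
    and U: "subspace U" "U \<subseteq> A" "\<And>z. z \<in> U \<Longrightarrow> z \<noteq> 0 \<Longrightarrow> Qform \<omega> B C z > 0"
    and dim_U: "dim U + dim (A \<inter> B) = dim A"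
    and x: "x \<in> A" and m: "m \<in> C" and y: "x + m \<in> B" and nonpos: "\<omega> m x \<le> 0"
  shows "x \<in> B"
proof (rule ccontr)
  assume "x \<notin> B"
  define N where "N = span (insert x (A \<inter> B))"
  have sA: "subspace A"
    using A by (rule lagrangian_subspace)
  have "N \<subseteq> A"
    unfolding N_def using x sA by (intro span_minimal) auto
  have "span (A \<inter> B) = A \<inter> B"
    using A B by (simp add: lagrangian_subspace subspace_inter)
  then have "x \<notin> span (A \<inter> B)"
    using \<open>x \<notin> B\<close> by blast
  then have dim_N: "dim N = dim (A \<inter> B) + 1"
    unfolding N_def by (simp add: dim_insert)
  have "0 \<in> N"
    unfolding N_def by (rule span_zero)
  then have "U \<inter> N = {0}"
    using U(3) Qform_nonpos_on_span[OF A B C x m y nonpos] subspace_0[OF U(1)]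
    unfolding N_def by (auto simp flip: not_le)
  then have "dim U + dim N \<le> dim A"
    using U \<open>N \<subseteq> A\<close> sA by (intro dim_add_le_if_inter_zero) (auto simp: N_def)
  then show False
    using dim_U dim_N by simp
qed

lemma Qform_positive_imp_transversal:
  assumes A: "lagrangian \<omega> A" and B: "lagrangian \<omega> B" and C: "lagrangian \<omega> C"
    and AC: "A \<inter> C = {0}"
    and U: "subspace U" "U \<subseteq> A \<inter> (B + C)" "\<And>z. z \<in> U \<Longrightarrow> z \<noteq> 0 \<Longrightarrow> Qform \<omega> B C z > 0"
    and dim_U: "dim U + dim (A \<inter> B) = dim A"
  shows "B \<inter> C = {0}"
proof (rule ccontr)
  assume "B \<inter> C \<noteq> {0}"
  have sA: "subspace A" and sB: "subspace B" and sC: "subspace C"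
    using A B C by (auto intro: lagrangian_subspace)
  obtain d where d: "d \<in> B" "d \<in> C" "d \<noteq> 0"
    using \<open>B \<inter> C \<noteq> {0}\<close> subspace_0[OF sB] subspace_0[OF sC] by blast
  \<comment> \<open>Both U and \<open>A \<inter> B\<close> lie in the proper subspace of A that is \<omega>-orthogonal to d.\<close>
  define S where "S = {x \<in> A. \<omega> x d = 0}"
  have sS: "subspace S"
    unfolding S_def subspace_def using sA
    by (auto simp: subspace_0 subspace_add subspace_scale form.add_left form.scaleR_left
        form.zero_left)
  have "d \<notin> A"
    using d AC by blast
  then obtain x0 where "x0 \<in> A" "\<omega> d x0 \<noteq> 0"
    using lagrangian_maximal[OF A, of d] by blast
  then have "x0 \<notin> S"
    unfolding S_def using skew[of x0 d] by simp
  then have "S \<subset> A"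
    using \<open>x0 \<in> A\<close> unfolding S_def by blast
  then have "dim S < dim A"
    using dim_psubset[of S A] span_eq_iff[THEN iffD2, OF sS] span_eq_iff[THEN iffD2, OF sA]
    by simp
  have AB_S: "A \<inter> (B + C) \<subseteq> S"
    using lagrangian_isotropic[OF B _ d(1)] lagrangian_isotropic[OF C _ d(2)]
    unfolding S_def set_plus_def by (auto simp: form.add_left)
  moreover have "A \<inter> B \<subseteq> A \<inter> (B + C)"
    using subspace_0[OF sC] by (metis Int_mono add_0_right order_refl set_plus_intro subsetI)
  moreover have "Qform \<omega> B C z = 0" if "z \<in> B" for z
    using Qform_eq[OF B C that subspace_0[OF sC]] by (simp add: form.zero_right)
  then have "U \<inter> (A \<inter> B) = {0}"
    using U(3) subspace_0[OF U(1)] subspace_0[OF sA] subspace_0[OF sB] by force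
  ultimately have "dim U + dim (A \<inter> B) \<le> dim S"
    using U sS sA sB by (intro dim_add_le_if_inter_zero subspace_inter) auto
  then show False
    using dim_U \<open>dim S < dim A\<close> by simp
qed

lemma triple_index_imp_triple_positive:
  assumes dim_V: "DIM('v) = 2 * n"
    and A: "lagrangian \<omega> A" and B: "lagrangian \<omega> B" and C: "lagrangian \<omega> C"
    and AC: "A \<inter> C = {0}" and index: "triple_index \<omega> A B C = n - dim (A \<inter> B)"
  shows "triple_positive \<omega> A B C"
proof -
  have sA: "subspace A" and sB: "subspace B" and sC: "subspace C"
    using A B C by (auto intro: lagrangian_subspace)
  have "0 \<in> B + C"
    using set_plus_intro[OF subspace_0[OF sB] subspace_0[OF sC]] by simp
  then have "0 \<in> A \<inter> (B + C)"
    using subspace_0[OF sA] by blast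
  then obtain U where U: "subspace U" "U \<subseteq> A \<inter> (B + C)"
    "\<And>z. z \<in> U \<Longrightarrow> z \<noteq> 0 \<Longrightarrow> Qform \<omega> B C z > 0"
    "dim U = pos_inertia (Qform \<omega> B C) (A \<inter> (B + C))"
    using pos_inertia_witness[of "A \<inter> (B + C)" "Qform \<omega> B C"] by blast
  have "A \<inter> B \<inter> C = {0}"
    using AC subspace_0[OF sB] by auto
  moreover have "dim A = n"
    using dim_lagrangian[OF A] dim_V by simp
  moreover have "dim (A \<inter> B) \<le> dim A"
    by (intro dim_subset) auto
  ultimately have dim_U: "dim U + dim (A \<inter> B) = dim A"
    using index U(4) unfolding triple_index_def AC by simp
  have BC: "B \<inter> C = {0}"
    using Qform_positive_imp_transversal[OF A B C AC U(1-3) dim_U] .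
  show ?thesis
    unfolding triple_positive_def
  proof (intro ballI impI)
    fix x y m assume "x \<in> A" "y \<in> B" "m \<in> C" "y = x + m" "\<omega> m x \<le> 0"
    moreover have "U \<subseteq> A"
      using U(2) by blast
    ultimately have "x \<in> B"
      using Qform_nonpos_imp_mem[OF A B C U(1) _ U(3) dim_U] by blast
    then have "y - x \<in> B"
      using \<open>y \<in> B\<close> sB by (simp add: subspace_diff)
    then show "m = 0"
      using BC \<open>m \<in> C\<close> \<open>y = x + m\<close> by auto
  qed
qed

end

section \<open>Paths of linear maps\<close>

lemma linear_transversal_lower_bound:
  fixes G :: "'a::euclidean_space \<Rightarrow> 'a"
  assumes "linear G" "subspace A" "subspace B"
    and transversal: "\<And>x b. x \<in> A \<Longrightarrow> b \<in> B \<Longrightarrow> G x + b = 0 \<Longrightarrow> x = 0 \<and> b = 0"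
  obtains C where "C > 0" "\<And>x b. x \<in> A \<Longrightarrow> b \<in> B \<Longrightarrow> norm x + norm b \<le> C * norm (G x + b)"
proof -
  let ?f = "\<lambda>p. G (fst p) + snd p"
  have "linear ?f"
    using assms(1) by (intro linearI) (auto simp: linear_add linear_scale algebra_simps)
  then have "bounded_linear ?f"
    by (simp add: linear_conv_bounded_linear)
  moreover have "closed (A \<times> B)" "subspace (A \<times> B)"
    using assms(2,3) by (simp_all add: closed_Times closed_subspace subspace_Times)
  moreover have "\<forall>p\<in>A \<times> B. ?f p = 0 \<longrightarrow> p = 0"
    using transversal by (auto simp: zero_prod_def)
  ultimately obtain e where "e > 0" and e: "\<forall>p\<in>A \<times> B. e * norm p \<le> norm (?f p)"
    using injective_imp_isometric[of "A \<times> B" ?f] by blast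
  show ?thesis
  proof
    show "0 < 2 / e"
      using \<open>e > 0\<close> by simp
    fix x b assume "x \<in> A" "b \<in> B"
    then have "e * norm (x, b) \<le> norm (G x + b)"
      using e by (metis SigmaI fst_conv snd_conv)
    moreover have "norm x + norm b \<le> 2 * norm (x, b)"
      using norm_fst_le[of x b] norm_snd_le[of b x] by linarith
    then have "e * (norm x + norm b) \<le> e * (2 * norm (x, b))"
      using \<open>e > 0\<close> by (intro mult_left_mono) auto
    ultimately have "(norm x + norm b) * e \<le> 2 * norm (G x + b)"
      by (simp add: mult.commute)
    then show "norm x + norm b \<le> 2 / e * norm (G x + b)"
      using \<open>e > 0\<close> by (simp add: pos_le_divide_eq)
  qed
qed

lemma interval_continuity_induct:
  fixes P :: "real \<Rightarrow> bool"
  assumes "P 0"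
    and local: "\<And>s. s \<in> {0..T} \<Longrightarrow> P s \<Longrightarrow> eventually P (at s within {0..T})"
    and left: "\<And>s. 0 < s \<Longrightarrow> s \<le> T \<Longrightarrow> \<forall>t\<in>{0..<s}. P t \<Longrightarrow> P s"
  shows "\<forall>t\<in>{0..T}. P t"
proof (rule ccontr)
  \<comment> \<open>The infimum s of the counterexamples is not one itself, so neither is anything near s.\<close>
  define B where "B = {t \<in> {0..T}. \<not> P t}"
  assume "\<not> (\<forall>t\<in>{0..T}. P t)"
  then have "B \<noteq> {}"
    unfolding B_def by blast
  have "bdd_below B"
    unfolding B_def by (auto intro: bdd_belowI[of _ 0])
  define s where "s = Inf B"
  obtain b where "b \<in> B"
    using \<open>B \<noteq> {}\<close> by blast
  then have "s \<le> T"
    using cInf_lower[OF _ \<open>bdd_below B\<close>] unfolding s_def B_def by fastforce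
  have "0 \<le> s"
    unfolding s_def using \<open>B \<noteq> {}\<close> by (intro cInf_greatest) (auto simp: B_def)
  have before: "\<forall>t\<in>{0..<s}. P t"
  proof
    fix t assume "t \<in> {0..<s}"
    then show "P t"
      using \<open>bdd_below B\<close> cInf_lower[of t B] \<open>s \<le> T\<close> unfolding s_def B_def by force
  qed
  have "P s"
    using \<open>P 0\<close> left[OF _ \<open>s \<le> T\<close> before] \<open>0 \<le> s\<close> by (cases "s = 0") auto
  then obtain d where "d > 0" and d: "\<And>t. t \<in> {0..T} \<Longrightarrow> t \<noteq> s \<Longrightarrow> dist t s < d \<Longrightarrow> P t"
    using local[of s] \<open>0 \<le> s\<close> \<open>s \<le> T\<close> unfolding eventually_at by auto
  have "s + d \<le> t" if "t \<in> B" for t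
    using d[of t] cInf_lower[OF that \<open>bdd_below B\<close>] \<open>P s\<close> that
    unfolding s_def B_def dist_real_def by force
  then have "s + d \<le> s"
    unfolding s_def using \<open>B \<noteq> {}\<close> by (intro cInf_greatest) auto
  then show False
    using \<open>d > 0\<close> by simp
qed

lemma at_left_le_at_within_interval:
  fixes s T :: real
  assumes "0 < s" "s \<le> T"
  shows "at_left s \<le> at s within {0..T}"
  using at_le[of "{0..s}" "{0..T}" s] at_within_Icc_at_left[of 0 s] assms by simp

lemma tendsto_zero_if_linear_bound:
  fixes f :: "real \<Rightarrow> 'a::real_normed_vector"
  assumes "\<forall>\<^sub>F t in at s within S. norm (f t) \<le> c * \<bar>t - s\<bar>"
  shows "(f \<longlongrightarrow> 0) (at s within S)"
  using assms by (rule Lim_null_comparison) (intro tendsto_eq_intros, auto)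

lemma tendsto_quotient_zero_if_quadratic_bound:
  fixes r :: "real \<Rightarrow> real"
  assumes "\<forall>\<^sub>F t in at s within S. \<bar>r t\<bar> \<le> Q * (t - s)\<^sup>2"
  shows "((\<lambda>t. r t / (t - s)) \<longlongrightarrow> 0) (at s within S)"
proof (rule Lim_null_comparison)
  have "\<forall>\<^sub>F t in at s within S. t \<noteq> s"
    by (simp add: eventually_at_filter)
  with assms show "\<forall>\<^sub>F t in at s within S. norm (r t / (t - s)) \<le> Q * \<bar>t - s\<bar>"
  proof eventually_elim
    case (elim t)
    then have "\<bar>r t\<bar> \<le> (Q * \<bar>t - s\<bar>) * \<bar>t - s\<bar>"
      by (simp add: power2_eq_square abs_mult_self_eq mult.assoc)
    then show ?case
      using elim by (simp add: abs_divide divide_le_eq)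
  qed
  show "((\<lambda>t. Q * \<bar>t - s\<bar>) \<longlongrightarrow> 0) (at s within S)"
    by (intro tendsto_eq_intros) auto
qed

locale linear_C1_path =
  fixes T :: real and \<psi> :: "real \<Rightarrow> 'v::euclidean_space \<Rightarrow> 'v"
  assumes linear_path: "t \<in> {0..T} \<Longrightarrow> linear (\<psi> t)"
    and C1_path: "C1_path_on {0..T} \<psi>"
begin

definition op_dist :: "real \<Rightarrow> real \<Rightarrow> real"
  where "op_dist s t = (\<Sum>i\<in>Basis. norm (\<psi> t i - \<psi> s i))"

lemma norm_diff_le_op_dist:
  assumes s: "s \<in> {0..T}" and t: "t \<in> {0..T}"
  shows "norm (\<psi> t z - \<psi> s z) \<le> op_dist s t * norm z"
proof -
  have expand: "\<psi> r z = (\<Sum>i\<in>Basis. (z \<bullet> i) *\<^sub>R \<psi> r i)" if "r \<in> {0..T}" for r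
  proof -
    have "\<psi> r z = \<psi> r (\<Sum>i\<in>Basis. (z \<bullet> i) *\<^sub>R i)"
      by (simp add: euclidean_representation)
    then show ?thesis
      using linear_path[OF that] by (simp add: linear_sum linear_scale)
  qed
  have "norm (\<psi> t z - \<psi> s z) = norm (\<Sum>i\<in>Basis. (z \<bullet> i) *\<^sub>R (\<psi> t i - \<psi> s i))"
    using expand[OF t] expand[OF s] by (simp add: sum_subtractf scaleR_diff_right)
  also have "\<dots> \<le> (\<Sum>i\<in>Basis. norm z * norm (\<psi> t i - \<psi> s i))"
    by (intro order_trans[OF norm_sum] sum_mono) (auto intro: mult_right_mono Basis_le_norm)
  also have "\<dots> = op_dist s t * norm z"
    by (simp add: op_dist_def sum_distrib_left mult.commute)
  finally show ?thesis .
qed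

lemma tendsto_op_dist:
  assumes s: "s \<in> {0..T}" and "\<forall>\<^sub>F z in F. \<tau> z \<in> {0..T}" and "(\<tau> \<longlongrightarrow> s) F"
  shows "((\<lambda>z. op_dist s (\<tau> z)) \<longlongrightarrow> 0) F"
proof -
  from C1_path obtain \<psi>' where der: "\<forall>t\<in>{0..T}. \<forall>v.
      ((\<lambda>s. \<psi> s v) has_vector_derivative \<psi>' t v) (at t within {0..T})"
    unfolding C1_path_on_def by blast
  have "((\<lambda>z. \<psi> (\<tau> z) i) \<longlongrightarrow> \<psi> s i) F" for i
    using has_vector_derivative_continuous[OF der[rule_format, OF s]] assms(2,3)
    by (rule continuous_within_tendsto_compose)
  then have "((\<lambda>z. norm (\<psi> (\<tau> z) i - \<psi> s i)) \<longlongrightarrow> 0) F" for i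
    by (intro tendsto_norm_zero LIM_zero)
  then show ?thesis
    unfolding op_dist_def by (intro tendsto_null_sum)
qed

lemma tendsto_op_dist_at:
  "s \<in> {0..T} \<Longrightarrow> (op_dist s \<longlongrightarrow> 0) (at s within {0..T})"
  using tendsto_op_dist[where F = "at s within {0..T}" and \<tau> = "\<lambda>t. t"]
  by (simp add: eventually_at_filter tendsto_ident_at)

lemma tendsto_path_apply:
  assumes s: "s \<in> {0..T}" and ev: "\<forall>\<^sub>F z in F. \<tau> z \<in> {0..T}" and lim: "(\<tau> \<longlongrightarrow> s) F"
    and v: "(v \<longlongrightarrow> v0) F"
  shows "((\<lambda>z. \<psi> (\<tau> z) (v z)) \<longlongrightarrow> \<psi> s v0) F"
proof -
  have bound: "((\<lambda>z. op_dist s (\<tau> z) * norm (v z)) \<longlongrightarrow> 0) F"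
    using tendsto_mult[OF tendsto_op_dist[OF s ev lim] tendsto_norm[OF v]] by simp
  have diff: "((\<lambda>z. \<psi> (\<tau> z) (v z) - \<psi> s (v z)) \<longlongrightarrow> 0) F"
    using ev by (intro Lim_null_comparison[OF _ bound])
      (auto elim!: eventually_mono intro: norm_diff_le_op_dist[OF s])
  have "bounded_linear (\<psi> s)"
    using linear_path[OF s] by (simp add: linear_conv_bounded_linear)
  then have "((\<lambda>z. \<psi> s (v z)) \<longlongrightarrow> \<psi> s v0) F"
    using v by (rule bounded_linear.tendsto)
  from tendsto_add[OF diff this] show ?thesis
    by simp
qed

lemma op_dist_lipschitz:
  assumes s: "s \<in> {0..T}"
  obtains c where "\<forall>\<^sub>F t in at s within {0..T}. op_dist s t \<le> c * \<bar>t - s\<bar>"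
proof -
  from C1_path obtain \<psi>' where der: "\<forall>t\<in>{0..T}. \<forall>v.
      ((\<lambda>s. \<psi> s v) has_vector_derivative \<psi>' t v) (at t within {0..T})"
    unfolding C1_path_on_def by blast
  have "\<forall>\<^sub>F t in at s within {0..T}. norm (\<psi> t i - \<psi> s i) \<le> (norm (\<psi>' s i) + 1) * \<bar>t - s\<bar>"
    for i
  proof -
    have "((\<lambda>t. (1 / norm (t - s)) *\<^sub>R (\<psi> t i - (\<psi> s i + (t - s) *\<^sub>R \<psi>' s i))) \<longlongrightarrow> 0)
        (at s within {0..T})"
      using der s unfolding has_vector_derivative_def has_derivative_within by blast
    from order_tendstoD(2)[OF tendsto_norm_zero[OF this], of 1]
    have "\<forall>\<^sub>F t in at s within {0..T}.
        norm (\<psi> t i - (\<psi> s i + (t - s) *\<^sub>R \<psi>' s i)) < \<bar>t - s\<bar>"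
      by (auto simp: eventually_at_filter elim!: eventually_mono simp: divide_less_eq)
    then show ?thesis
    proof eventually_elim
      case (elim t)
      define d where "d = \<psi>' s i"
      have "norm (\<psi> t i - \<psi> s i) \<le> norm (\<psi> t i - (\<psi> s i + (t - s) *\<^sub>R d)) + norm ((t - s) *\<^sub>R d)"
        using norm_triangle_ineq[of "\<psi> t i - (\<psi> s i + (t - s) *\<^sub>R d)" "(t - s) *\<^sub>R d"]
        by (simp add: algebra_simps)
      then have "norm (\<psi> t i - \<psi> s i) \<le> \<bar>t - s\<bar> + \<bar>t - s\<bar> * norm d"
        using elim unfolding d_def by simp
      then show ?case
        unfolding d_def by (simp add: algebra_simps)
    qed
  qed
  then have "\<forall>\<^sub>F t in at s within {0..T}.
      \<forall>i\<in>Basis. norm (\<psi> t i - \<psi> s i) \<le> (norm (\<psi>' s i) + 1) * \<bar>t - s\<bar>"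
    by (intro eventually_ball_finite) auto
  then have "\<forall>\<^sub>F t in at s within {0..T}. op_dist s t \<le> (\<Sum>i\<in>Basis. norm (\<psi>' s i) + 1) * \<bar>t - s\<bar>"
    by eventually_elim (simp add: op_dist_def sum_distrib_right sum_mono)
  then show ?thesis
    by (rule that)
qed

lemma eventually_path_bounded:
  assumes s: "s \<in> {0..T}"
  obtains M where "M > 0" "\<forall>\<^sub>F t in at s within {0..T}. \<forall>z. norm (\<psi> t z) \<le> M * norm z"
proof -
  obtain B where "B > 0" and B: "\<And>z. norm (\<psi> s z) \<le> B * norm z"
    using linear_bounded_pos[OF linear_path[OF s]] by blast
  have "\<forall>\<^sub>F t in at s within {0..T}. t \<in> {0..T} \<and> op_dist s t < 1"
    using order_tendstoD(2)[OF tendsto_op_dist_at[OF s], of 1] by (auto simp: eventually_at_filter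
        elim: eventually_mono)
  then have "\<forall>\<^sub>F t in at s within {0..T}. \<forall>z. norm (\<psi> t z) \<le> (B + 1) * norm z"
  proof eventually_elim
    case (elim t)
    show ?case
    proof
      fix z
      have "norm (\<psi> t z) \<le> norm (\<psi> s z) + op_dist s t * norm z"
        using norm_diff_le_op_dist[OF s, of t z] elim norm_triangle_sub[of "\<psi> t z" "\<psi> s z"]
        by linarith
      also have "\<dots> \<le> (B + 1) * norm z"
        using B[of z] elim mult_right_mono[of "op_dist s t" 1 "norm z"] by (simp add: algebra_simps)
      finally show "norm (\<psi> t z) \<le> (B + 1) * norm z" .
    qed
  qed
  then show ?thesis
    using \<open>B > 0\<close> that[of "B + 1"] by simp
qed

lemma eventually_transversal_bound:
  assumes s: "s \<in> {0..T}" and A: "subspace A" and B: "subspace B"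
    and transversal: "\<And>x b. x \<in> A \<Longrightarrow> b \<in> B \<Longrightarrow> \<psi> s x + b = 0 \<Longrightarrow> x = 0 \<and> b = 0"
  obtains C where "C > 0" "\<And>x b. x \<in> A \<Longrightarrow> b \<in> B \<Longrightarrow> norm x + norm b \<le> C * norm (\<psi> s x + b)"
    "\<forall>\<^sub>F t in at s within {0..T}. \<forall>x\<in>A. \<forall>b\<in>B. norm x + norm b \<le> 2 * C * norm (\<psi> t x + b)"
proof -
  obtain C where "C > 0" and C: "\<And>x b. x \<in> A \<Longrightarrow> b \<in> B \<Longrightarrow> norm x + norm b \<le> C * norm (\<psi> s x + b)"
    using linear_transversal_lower_bound[OF linear_path[OF s] A B transversal] by blast
  \<comment> \<open>Once \<open>op_dist s t \<le> 1 / (2 C)\<close>, the perturbation costs at most half of the left-hand side.\<close>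
  have "\<forall>\<^sub>F t in at s within {0..T}. t \<in> {0..T} \<and> op_dist s t < 1 / (2 * C)"
    using order_tendstoD(2)[OF tendsto_op_dist_at[OF s], of "1 / (2 * C)"] \<open>C > 0\<close>
    by (auto simp: eventually_at_filter elim: eventually_mono)
  then have "\<forall>\<^sub>F t in at s within {0..T}. \<forall>x\<in>A. \<forall>b\<in>B. norm x + norm b \<le> 2 * C * norm (\<psi> t x + b)"
  proof eventually_elim
    case (elim t)
    show ?case
    proof (intro ballI)
      fix x b assume "x \<in> A" "b \<in> B"
      have "norm (\<psi> s x + b) \<le> norm (\<psi> t x + b) + norm (\<psi> t x - \<psi> s x)"
        using norm_triangle_ineq4[of "\<psi> t x + b" "\<psi> t x - \<psi> s x"] by (simp add: algebra_simps)
      then have "norm (\<psi> s x + b) \<le> norm (\<psi> t x + b) + op_dist s t * norm x"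
        using norm_diff_le_op_dist[OF s, of t x] elim by linarith
      then have "C * norm (\<psi> s x + b) \<le> C * norm (\<psi> t x + b) + C * (op_dist s t * norm x)"
        using \<open>C > 0\<close> by (metis distrib_left mult_left_mono less_imp_le)
      moreover have "C * (op_dist s t * norm x) \<le> norm x / 2"
        using elim \<open>C > 0\<close> mult_right_mono[of "op_dist s t" "1 / (2 * C)" "norm x"]
        by (simp add: field_simps)
      ultimately have "norm x + norm b \<le> C * norm (\<psi> t x + b) + norm x / 2"
        using C[OF \<open>x \<in> A\<close> \<open>b \<in> B\<close>] by linarith
      then show "norm x + norm b \<le> 2 * C * norm (\<psi> t x + b)"
        using norm_ge_zero[of b] by linarith
    qed
  qed
  then show ?thesis
    using that \<open>C > 0\<close> C by blast
qed

lemma correction_norm_le: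
  assumes s: "s \<in> {0..T}" and t: "t \<in> {0..T}" and "C > 0" and small: "C * op_dist s t \<le> 1 / 2"
    and L: "subspace L" and W: "subspace W"
    and C: "\<And>y w. y \<in> L \<Longrightarrow> w \<in> W \<Longrightarrow> norm y + norm w \<le> C * norm (\<psi> s y + w)"
    and y0: "y0 \<in> L" and yt: "yt \<in> L" and w: "w \<in> W" and eq: "\<psi> t yt = \<psi> s y0 + w"
  shows "norm w \<le> C * op_dist s t * norm y0"
proof -
  have "\<psi> s (yt - y0) + - w = \<psi> s yt - \<psi> t yt"
    using eq linear_diff[OF linear_path[OF s]] by simp
  then have "norm (yt - y0) + norm w \<le> C * norm (\<psi> t yt - \<psi> s yt)"
    using C[of "yt - y0" "- w"] y0 yt w L W by (simp add: subspace_diff subspace_neg norm_minus_commute)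
  also have "\<dots> \<le> C * (op_dist s t * (norm y0 + norm (yt - y0)))"
  proof -
    have "norm yt \<le> norm y0 + norm (yt - y0)"
      using norm_triangle_sub[of yt y0] by simp
    then have "op_dist s t * norm yt \<le> op_dist s t * (norm y0 + norm (yt - y0))"
      by (rule mult_left_mono) (simp add: op_dist_def sum_nonneg)
    then show ?thesis
      using norm_diff_le_op_dist[OF s t, of yt] \<open>C > 0\<close> by (intro mult_left_mono) simp_all
  qed
  also have "\<dots> = C * op_dist s t * norm y0 + C * op_dist s t * norm (yt - y0)"
    by (simp add: algebra_simps)
  finally show ?thesis
    using small mult_right_mono[OF small, of "norm (yt - y0)"] norm_ge_zero[of "yt - y0"] by linarith
qed

end

locale symplectic_path = symplectic_space \<omega>
  for \<omega> :: "'v::euclidean_space \<Rightarrow> 'v \<Rightarrow> real" +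
  fixes T :: real and \<psi> :: "real \<Rightarrow> 'v \<Rightarrow> 'v"
  assumes symplectic_path: "t \<in> {0..T} \<Longrightarrow> symplectic_map \<omega> (\<psi> t)"
    and C1_symplectic_path: "C1_path_on {0..T} \<psi>"
begin

sublocale linear_C1_path T \<psi>
  by (metis linear_C1_path.intro symplectic_map_linear symplectic_path C1_symplectic_path)

lemma lagrangian_path:
  assumes "t \<in> {0..T}" "lagrangian \<omega> L"
  shows "lagrangian \<omega> (\<psi> t ` L)"
  using lagrangian_image[OF symplectic_path[OF assms(1)] assms(2)] .

lemma path_transversal:
  assumes "t \<in> {0..T}" "subspace B" "\<psi> t ` A \<inter> B = {0}" "x \<in> A" "b \<in> B" "\<psi> t x + b = 0"
  shows "x = 0 \<and> b = 0"
  using image_inter_zero_imp_sum_zero[OF linear_path[OF assms(1)]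
      symplectic_map_inj[OF symplectic_path[OF assms(1)]] assms(2-6)] .

lemma crossing_vec_lipschitz:
  assumes s: "s \<in> {0..T}" and L: "lagrangian \<omega> L" and W: "lagrangian \<omega> W"
    and WL: "W \<inter> \<psi> s ` L = {0}" and v: "v \<in> \<psi> s ` L"
  obtains c where "\<forall>\<^sub>F t in at s within {0..T}.
    crossing_vec W (\<lambda>t. \<psi> t ` L) v t \<in> W \<and> v + crossing_vec W (\<lambda>t. \<psi> t ` L) v t \<in> \<psi> t ` L \<and>
    norm (crossing_vec W (\<lambda>t. \<psi> t ` L) v t) \<le> c * \<bar>t - s\<bar>"
proof -
  let ?cv = "crossing_vec W (\<lambda>t. \<psi> t ` L) v"
  have sL: "subspace L" and sW: "subspace W"
    using L W by (auto intro: lagrangian_subspace)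
  obtain y0 where y0: "y0 \<in> L" "\<psi> s y0 = v"
    using v by blast
  have "y = 0 \<and> w = 0" if "y \<in> L" "w \<in> W" "\<psi> s y + w = 0" for y w
    using path_transversal[OF s sW, of L] WL that by (simp add: Int_commute)
  then obtain C where "C > 0"
    and C_s: "\<And>y w. y \<in> L \<Longrightarrow> w \<in> W \<Longrightarrow> norm y + norm w \<le> C * norm (\<psi> s y + w)"
    and C_t: "\<forall>\<^sub>F t in at s within {0..T}. \<forall>y\<in>L. \<forall>w\<in>W. norm y + norm w \<le> 2 * C * norm (\<psi> t y + w)"
    using eventually_transversal_bound[OF s sL sW] by blast
  obtain \<kappa> where \<kappa>: "\<forall>\<^sub>F t in at s within {0..T}. op_dist s t \<le> \<kappa> * \<bar>t - s\<bar>"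
    using op_dist_lipschitz[OF s] by blast
  have small: "\<forall>\<^sub>F t in at s within {0..T}. t \<in> {0..T} \<and> op_dist s t < 1 / (2 * C)"
    using order_tendstoD(2)[OF tendsto_op_dist_at[OF s], of "1 / (2 * C)"] \<open>C > 0\<close>
    by (auto simp: eventually_at_filter elim: eventually_mono)
  have "\<forall>\<^sub>F t in at s within {0..T}.
      ?cv t \<in> W \<and> v + ?cv t \<in> \<psi> t ` L \<and> norm (?cv t) \<le> (C * \<kappa> * norm y0) * \<bar>t - s\<bar>"
    using C_t \<kappa> small
  proof eventually_elim
    case (elim t)
    then have t: "t \<in> {0..T}"
      by simp
    have "\<psi> t ` L \<inter> W \<subseteq> {0}"
      using sum_bound_imp_image_inter_zero[OF sW, of L "2 * C" "\<psi> t"] elim(1) .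
    then have "W \<inter> \<psi> t ` L = {0}"
      using subspace_0[OF sW] subspace_0[OF sL] linear_0[OF linear_path[OF t]] by auto
    then have cv: "?cv t \<in> W \<and> v + ?cv t \<in> \<psi> t ` L"
      using crossing_vec_mem[where l = "\<lambda>t. \<psi> t ` L", OF W lagrangian_path[OF t L]] by simp
    then obtain yt where yt: "yt \<in> L" "\<psi> t yt = \<psi> s y0 + ?cv t"
      using y0(2) by (metis imageE)
    have "C * op_dist s t \<le> 1 / 2"
      using elim(3) \<open>C > 0\<close> by (simp add: field_simps)
    then have "norm (?cv t) \<le> C * op_dist s t * norm y0"
      using correction_norm_le[OF s t \<open>C > 0\<close> _ sL sW C_s y0(1) yt(1)] cv yt(2) by blast
    also have "\<dots> \<le> C * (\<kappa> * \<bar>t - s\<bar>) * norm y0"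
      using elim(2) \<open>C > 0\<close> by (intro mult_right_mono mult_left_mono) auto
    finally show ?case
      using cv by (simp add: algebra_simps)
  qed
  then show ?thesis
    by (rule that)
qed

lemma tendsto_bilinear_remainder:
  assumes s: "s \<in> {0..T}"
    and ab: "\<forall>\<^sub>F t in at s within {0..T}. norm (a t) \<le> \<kappa> * \<bar>t - s\<bar> \<and> norm (b t) \<le> \<kappa> * \<bar>t - s\<bar>"
  shows "((\<lambda>t. \<omega> (b t) (\<psi> t (a t)) / (t - s)) \<longlongrightarrow> 0) (at s within {0..T})"
proof -
  obtain M where "M > 0" and M: "\<forall>\<^sub>F t in at s within {0..T}. \<forall>z. norm (\<psi> t z) \<le> M * norm z"
    using eventually_path_bounded[OF s] by blast
  obtain K where "K > 0" and K: "\<And>x y. \<bar>\<omega> x y\<bar> \<le> norm x * norm y * K"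
    using form.pos_bounded by auto
  have "\<forall>\<^sub>F t in at s within {0..T}. \<bar>\<omega> (b t) (\<psi> t (a t))\<bar> \<le> (\<kappa> * \<kappa> * M * K) * (t - s)\<^sup>2"
    using ab M
  proof eventually_elim
    case (elim t)
    have a: "norm (a t) \<le> \<kappa> * \<bar>t - s\<bar>" and b: "norm (b t) \<le> \<kappa> * \<bar>t - s\<bar>"
      using elim(1) by simp_all
    have "\<bar>\<omega> (b t) (\<psi> t (a t))\<bar> \<le> norm (b t) * norm (\<psi> t (a t)) * K"
      by (rule K)
    also have "\<dots> \<le> norm (b t) * (M * norm (a t)) * K"
      using elim(2) \<open>K > 0\<close> by (intro mult_right_mono mult_left_mono) auto
    also have "\<dots> \<le> (\<kappa> * \<bar>t - s\<bar>) * (M * (\<kappa> * \<bar>t - s\<bar>)) * K"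
      using a b \<open>K > 0\<close> \<open>M > 0\<close> order_trans[OF norm_ge_zero b]
      by (intro mult_right_mono mult_mono mult_left_mono) auto
    finally show ?case
      by (simp add: power2_eq_square abs_mult_self_eq algebra_simps)
  qed
  then show ?thesis
    by (rule tendsto_quotient_zero_if_quadratic_bound)
qed

end

section \<open>Positivity along a symplectic path\<close>

locale lagrangian_triple_path = symplectic_path \<omega> T \<psi>
  for \<omega> :: "'v::euclidean_space \<Rightarrow> 'v \<Rightarrow> real" and T \<psi> +
  fixes L1 L2 L3 :: "'v set"
  assumes lagrangian_L1: "lagrangian \<omega> L1"
    and lagrangian_L2: "lagrangian \<omega> L2"
    and lagrangian_L3: "lagrangian \<omega> L3"
    and transversal_L1_L3: "t \<in> {0..T} \<Longrightarrow> \<psi> t ` L1 \<inter> L3 = {0}"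
begin

abbreviation positive_at :: "real \<Rightarrow> bool"
  where "positive_at t \<equiv> triple_positive \<omega> (\<psi> t ` L1) (\<psi> t ` L2) L3"

lemma positive_at_iff: "positive_at t \<longleftrightarrow>
    (\<forall>x\<in>L1. \<forall>y\<in>L2. \<forall>m\<in>L3. \<psi> t y = \<psi> t x + m \<longrightarrow> \<omega> m (\<psi> t x) \<le> 0 \<longrightarrow> m = 0)"
  unfolding triple_positive_def by auto

lemma nonneg_at_iff: "triple_nonneg \<omega> (\<psi> t ` L1) (\<psi> t ` L2) L3 \<longleftrightarrow>
    (\<forall>x\<in>L1. \<forall>y\<in>L2. \<forall>m\<in>L3. \<psi> t y = \<psi> t x + m \<longrightarrow> 0 \<le> \<omega> m (\<psi> t x))"
  unfolding triple_nonneg_def by auto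

lemma subspace_L1: "subspace L1" and subspace_L2: "subspace L2" and subspace_L3: "subspace L3"
  using lagrangian_L1 lagrangian_L2 lagrangian_L3 by (auto intro: lagrangian_subspace)

lemma transversal_decomp_path:
  assumes s: "s \<in> {0..T}"
  obtains C a b where "C > 0"
    "\<And>t. t \<in> {0..T} \<Longrightarrow> a t \<in> L1 \<and> b t \<in> L3 \<and> z t = \<psi> t (a t) + b t"
    "\<forall>\<^sub>F t in at s within {0..T}. norm (a t) + norm (b t) \<le> C * norm (z t)"
proof -
  have "\<exists>p. fst p \<in> L1 \<and> snd p \<in> L3 \<and> z t = \<psi> t (fst p) + snd p" if t: "t \<in> {0..T}" for t
  proof -
    obtain x m where "x \<in> \<psi> t ` L1" "m \<in> L3" "z t = x + m"
      using lagrangian_transversal_decomp[OF lagrangian_path[OF t lagrangian_L1] lagrangian_L3]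
        transversal_L1_L3[OF t] by blast
    then show ?thesis
      by (metis fst_conv imageE snd_conv)
  qed
  then obtain p where p: "\<And>t. t \<in> {0..T} \<Longrightarrow>
      fst (p t) \<in> L1 \<and> snd (p t) \<in> L3 \<and> z t = \<psi> t (fst (p t)) + snd (p t)"
    by metis
  have "x = 0 \<and> b = 0" if "x \<in> L1" "b \<in> L3" "\<psi> s x + b = 0" for x b
    using path_transversal[OF s subspace_L3 transversal_L1_L3[OF s] that] .
  then obtain C where "C > 0" and C: "\<forall>\<^sub>F t in at s within {0..T}.
      \<forall>x\<in>L1. \<forall>b\<in>L3. norm x + norm b \<le> 2 * C * norm (\<psi> t x + b)"
    using eventually_transversal_bound[OF s subspace_L1 subspace_L3] by blast
  have "\<forall>\<^sub>F t in at s within {0..T}. t \<in> {0..T}"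
    by (simp add: eventually_at_filter)
  with C have "\<forall>\<^sub>F t in at s within {0..T}. norm (fst (p t)) + norm (snd (p t)) \<le> 2 * C * norm (z t)"
  proof eventually_elim
    case (elim t)
    then show ?case
      using p[OF elim(2)] by simp
  qed
  then show ?thesis
    using that[of "2 * C" "\<lambda>t. fst (p t)" "\<lambda>t. snd (p t)"] \<open>C > 0\<close> p by simp
qed

text \<open>Normalised witnesses against \<open>positive_at t\<close>: the component of x along \<open>L1 \<inter> L2\<close> only
  produces witnesses with \<open>m = 0\<close>, so it is removed, and the size is fixed so that limits of
  witnesses are again witnesses.\<close>

definition nonpositive_triples :: "real \<Rightarrow> ('v \<times> 'v \<times> 'v) set"
  where "nonpositive_triples t = {(x, y, m). x \<in> L1 \<and> y \<in> L2 \<and> m \<in> L3 \<and>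
    \<psi> t y = \<psi> t x + m \<and> \<omega> m (\<psi> t x) \<le> 0 \<and> (\<forall>k\<in>L1 \<inter> L2. k \<bullet> x = 0) \<and>
    norm x + norm y + norm m = 1}"

lemma nonpositive_witness_orthogonal:
  assumes t: "t \<in> {0..T}" and "\<not> positive_at t"
  obtains x y m where "x \<in> L1" "y \<in> L2" "m \<in> L3" "m \<noteq> 0" "\<psi> t y = \<psi> t x + m"
    "\<omega> m (\<psi> t x) \<le> 0" "\<forall>k\<in>L1 \<inter> L2. k \<bullet> x = 0"
proof -
  obtain x y m where x: "x \<in> L1" and y: "y \<in> L2" and m: "m \<in> L3" and "m \<noteq> 0"
    and eq: "\<psi> t y = \<psi> t x + m" and nonpos: "\<omega> m (\<psi> t x) \<le> 0"
    using assms(2) unfolding positive_at_iff by blast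
  have span_K: "span (L1 \<inter> L2) = L1 \<inter> L2"
    using subspace_L1 subspace_L2 by (simp add: subspace_inter)
  obtain k z where "k \<in> span (L1 \<inter> L2)" and z: "\<And>w. w \<in> span (L1 \<inter> L2) \<Longrightarrow> orthogonal z w"
    and x_eq: "x = k + z"
    by (metis orthogonal_subspace_decomp_exists)
  then have k: "k \<in> L1" "k \<in> L2"
    using span_K by auto
  have lin: "linear (\<psi> t)"
    by (rule linear_path[OF t])
  \<comment> \<open>Shifting x and y by \<open>k \<in> L1 \<inter> L2\<close> keeps m and the value of the form.\<close>
  have "\<omega> m (\<psi> t k) = \<omega> (\<psi> t y) (\<psi> t k) - \<omega> (\<psi> t x) (\<psi> t k)"
    using eq by (simp add: form.add_left)
  also have "\<dots> = 0"
    using symplectic_map_preserves[OF symplectic_path[OF t]] lagrangian_isotropic[OF lagrangian_L2 y k(2)]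
      lagrangian_isotropic[OF lagrangian_L1 x k(1)] by simp
  finally have "\<omega> m (\<psi> t z) \<le> 0"
    using nonpos x_eq linear_add[OF lin] by (simp add: form.add_right)
  moreover have "z \<in> L1" "y - k \<in> L2"
    using x_eq x y k subspace_L1 subspace_L2 by (metis add_diff_cancel_left' subspace_diff)+
  moreover have "\<psi> t (y - k) = \<psi> t z + m"
    using eq x_eq linear_diff[OF lin, of y k] linear_add[OF lin, of k z] by simp
  moreover have "\<forall>k\<in>L1 \<inter> L2. k \<bullet> z = 0"
    using z span_K unfolding orthogonal_def by (simp add: inner_commute)
  ultimately show ?thesis
    using that m \<open>m \<noteq> 0\<close> by blast
qed

lemma nonpositive_triples_nonempty:
  assumes t: "t \<in> {0..T}" and "\<not> positive_at t"
  shows "nonpositive_triples t \<noteq> {}"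
proof -
  obtain x y m where x: "x \<in> L1" and y: "y \<in> L2" and m: "m \<in> L3" and "m \<noteq> 0"
    and eq: "\<psi> t y = \<psi> t x + m" and nonpos: "\<omega> m (\<psi> t x) \<le> 0"
    and orth: "\<forall>k\<in>L1 \<inter> L2. k \<bullet> x = 0"
    using nonpositive_witness_orthogonal[OF assms] by blast
  have lin: "linear (\<psi> t)"
    by (rule linear_path[OF t])
  define c where "c = 1 / (norm x + norm y + norm m)"
  have size: "norm x + norm y + norm m > 0"
    using \<open>m \<noteq> 0\<close> by (simp add: add_nonneg_pos)
  then have "c > 0"
    unfolding c_def by simp
  have "(c *\<^sub>R x, c *\<^sub>R y, c *\<^sub>R m) \<in> nonpositive_triples t"
    unfolding nonpositive_triples_def mem_Collect_eq prod.case
  proof (intro conjI)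
    show "c *\<^sub>R x \<in> L1" "c *\<^sub>R y \<in> L2" "c *\<^sub>R m \<in> L3"
      using x y m subspace_L1 subspace_L2 subspace_L3 by (simp_all add: subspace_scale)
    show "\<psi> t (c *\<^sub>R y) = \<psi> t (c *\<^sub>R x) + c *\<^sub>R m"
      using eq linear_scale[OF lin] by (simp add: scaleR_add_right[symmetric])
    show "\<omega> (c *\<^sub>R m) (\<psi> t (c *\<^sub>R x)) \<le> 0"
      using \<open>c > 0\<close> nonpos linear_scale[OF lin]
      by (simp add: form.scaleR_left form.scaleR_right mult_nonneg_nonpos)
    show "\<forall>a\<in>L1 \<inter> L2. a \<bullet> c *\<^sub>R x = 0"
      using orth by simp
    have "norm (c *\<^sub>R x) + norm (c *\<^sub>R y) + norm (c *\<^sub>R m) = \<bar>c\<bar> * (norm x + norm y + norm m)"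
      by (simp only: norm_scaleR distrib_left)
    then show "norm (c *\<^sub>R x) + norm (c *\<^sub>R y) + norm (c *\<^sub>R m) = 1"
      using size \<open>c > 0\<close> unfolding c_def by simp
  qed
  then show ?thesis
    by blast
qed

lemma nonpositive_triples_empty:
  assumes t: "t \<in> {0..T}" and "positive_at t"
  shows "nonpositive_triples t = {}"
proof (intro equals0I, clarify)
  fix x y m assume "(x, y, m) \<in> nonpositive_triples t"
  then have x: "x \<in> L1" and y: "y \<in> L2" and "m \<in> L3" and eq: "\<psi> t y = \<psi> t x + m"
    and "\<omega> m (\<psi> t x) \<le> 0" and orth: "\<forall>k\<in>L1 \<inter> L2. k \<bullet> x = 0"
    and size: "norm x + norm y + norm m = 1"
    unfolding nonpositive_triples_def by auto
  then have "m = 0"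
    using assms(2) unfolding positive_at_iff by blast
  then have "y = x"
    using eq symplectic_map_inj[OF symplectic_path[OF t]] by (simp add: inj_eq)
  then have "x = 0"
    using orth x y by (metis IntI inner_eq_zero_iff)
  then show False
    using size \<open>y = x\<close> \<open>m = 0\<close> by simp
qed

lemma nonpositive_triples_closed:
  assumes s: "s \<in> {0..T}" and h: "\<And>n. h n \<in> {0..T}" "h \<longlonglongrightarrow> s"
    and p: "\<And>n. p n \<in> nonpositive_triples (h n)" and lim: "p \<longlonglongrightarrow> (x, y, m)"
  shows "(x, y, m) \<in> nonpositive_triples s"
proof -
  define X Y M where "X n = fst (p n)" and "Y n = fst (snd (p n))" and "M n = snd (snd (p n))" for n
  have XYM: "X \<longlonglongrightarrow> x" "Y \<longlonglongrightarrow> y" "M \<longlonglongrightarrow> m"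
    unfolding X_def Y_def M_def
    using tendsto_fst[OF lim] tendsto_fst[OF tendsto_snd[OF lim]] tendsto_snd[OF tendsto_snd[OF lim]]
    by simp_all
  have pn: "X n \<in> L1" "Y n \<in> L2" "M n \<in> L3" "\<psi> (h n) (Y n) = \<psi> (h n) (X n) + M n"
    "\<omega> (M n) (\<psi> (h n) (X n)) \<le> 0" "\<forall>k\<in>L1 \<inter> L2. k \<bullet> X n = 0"
    "norm (X n) + norm (Y n) + norm (M n) = 1" for n
    using p[of n] unfolding nonpositive_triples_def X_def Y_def M_def
    by (simp_all add: case_prod_beta)
  have "x \<in> L1"
    using pn(1) by (intro closed_sequentially[OF closed_subspace[OF subspace_L1] _ XYM(1)]) simp
  moreover have "y \<in> L2"
    using pn(2) by (intro closed_sequentially[OF closed_subspace[OF subspace_L2] _ XYM(2)]) simp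
  moreover have "m \<in> L3"
    using pn(3) by (intro closed_sequentially[OF closed_subspace[OF subspace_L3] _ XYM(3)]) simp
  moreover have ev: "\<forall>\<^sub>F n in sequentially. h n \<in> {0..T}"
    using h(1) by simp
  have PX: "(\<lambda>n. \<psi> (h n) (X n)) \<longlonglongrightarrow> \<psi> s x"
    using tendsto_path_apply[OF s ev h(2) XYM(1)] .
  have PY: "(\<lambda>n. \<psi> (h n) (Y n)) \<longlonglongrightarrow> \<psi> s y"
    using tendsto_path_apply[OF s ev h(2) XYM(2)] .
  have "(\<lambda>n. \<psi> (h n) (Y n)) \<longlonglongrightarrow> \<psi> s x + m"
    using tendsto_add[OF PX XYM(3)] pn(4) by simp
  then have "\<psi> s y = \<psi> s x + m"
    using PY LIMSEQ_unique by blast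
  moreover have "\<omega> m (\<psi> s x) \<le> 0"
    using form.tendsto[OF XYM(3) PX] pn(5) by (intro LIMSEQ_le_const2) auto
  moreover have "k \<bullet> x = 0" if "k \<in> L1 \<inter> L2" for k
    using tendsto_inner[OF tendsto_const XYM(1), of k] pn(6) that by (simp add: LIMSEQ_const_iff)
  moreover have "norm x + norm y + norm m = 1"
    using tendsto_add[OF tendsto_add[OF tendsto_norm[OF XYM(1)] tendsto_norm[OF XYM(2)]]
        tendsto_norm[OF XYM(3)]] pn(7) by (simp add: LIMSEQ_const_iff)
  ultimately show ?thesis
    unfolding nonpositive_triples_def by simp
qed

lemma norm_le_one_if_nonpositive_triple: "p \<in> nonpositive_triples t \<Longrightarrow> norm p \<le> 1"
  unfolding nonpositive_triples_def
  using norm_Pair_le[of "fst p" "snd p"] norm_Pair_le[of "fst (snd p)" "snd (snd p)"] by auto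

lemma positive_at_eventually:
  assumes s: "s \<in> {0..T}" and "positive_at s"
  shows "eventually positive_at (at s within {0..T})"
proof (rule sequentially_imp_eventually_within, intro allI impI)
  fix f assume f: "(\<forall>n. f n \<in> {0..T} \<and> f n \<noteq> s) \<and> f \<longlonglongrightarrow> s"
  show "\<forall>\<^sub>F n in sequentially. positive_at (f n)"
  proof (rule ccontr)
    assume "\<not> (\<forall>\<^sub>F n in sequentially. positive_at (f n))"
    then obtain r :: "nat \<Rightarrow> nat" where "strict_mono r" and r: "\<And>n. \<not> positive_at (f (r n))"
      using not_eventually_sequentiallyD by blast
    have "nonpositive_triples (f (r n)) \<noteq> {}" for n
      using nonpositive_triples_nonempty[OF _ r[of n]] f by simp
    then have "\<exists>p. p \<in> nonpositive_triples (f (r n))" for n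
      by blast
    then obtain p where p: "\<And>n. p n \<in> nonpositive_triples (f (r n))"
      by metis
    have "bounded (range p)"
      unfolding bounded_iff using norm_le_one_if_nonpositive_triple[OF p] by blast
    then obtain l and r' :: "nat \<Rightarrow> nat" where "strict_mono r'" and conv: "(p \<circ> r') \<longlonglongrightarrow> l"
      using bounded_imp_convergent_subsequence by blast
    obtain x y m where l: "l = (x, y, m)"
      using prod_cases3 by blast
    have "(f \<circ> r) \<longlonglongrightarrow> s"
      using f \<open>strict_mono r\<close> by (intro LIMSEQ_subseq_LIMSEQ) simp_all
    then have "(f \<circ> r \<circ> r') \<longlonglongrightarrow> s"
      using \<open>strict_mono r'\<close> by (rule LIMSEQ_subseq_LIMSEQ)
    moreover have "(f \<circ> r \<circ> r') n \<in> {0..T}"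
      and "(p \<circ> r') n \<in> nonpositive_triples ((f \<circ> r \<circ> r') n)" for n
      using f p by simp_all
    ultimately have "(x, y, m) \<in> nonpositive_triples s"
      using nonpositive_triples_closed[OF s] conv unfolding l by blast
    then show False
      using nonpositive_triples_empty[OF s \<open>positive_at s\<close>] by simp
  qed
qed

lemma perturbed_decomposition:
  assumes s: "s \<in> {0..T}" and x: "x \<in> L1" and y: "y \<in> L2" and m: "m \<in> L3"
    and eq: "\<psi> s y = \<psi> s x + m"
  obtains a b where "\<And>t. t \<in> {0..T} \<Longrightarrow> a t \<in> L1 \<and> b t \<in> L3 \<and> \<psi> t y = \<psi> t (x + a t) + (m + b t)"
    "(a \<longlongrightarrow> 0) (at s within {0..T})" "(b \<longlongrightarrow> 0) (at s within {0..T})"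
proof -
  define z where "z t = \<psi> t (y - x) - m" for t
  obtain C a b where "C > 0"
    and dec: "\<And>t. t \<in> {0..T} \<Longrightarrow> a t \<in> L1 \<and> b t \<in> L3 \<and> z t = \<psi> t (a t) + b t"
    and bound: "\<forall>\<^sub>F t in at s within {0..T}. norm (a t) + norm (b t) \<le> C * norm (z t)"
    using transversal_decomp_path[OF s, of z] by blast
  have "\<forall>\<^sub>F t in at s within {0..T}. t \<in> {0..T}"
    by (simp add: eventually_at_filter)
  from tendsto_path_apply[OF s this tendsto_ident_at tendsto_const[of "y - x"]]
  have "((\<lambda>t. \<psi> t (y - x)) \<longlongrightarrow> m) (at s within {0..T})"
    using eq linear_diff[OF linear_path[OF s], of y x] by simp
  from tendsto_diff[OF this tendsto_const[of m]]
  have "(z \<longlongrightarrow> 0) (at s within {0..T})"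
    unfolding z_def by simp
  from tendsto_mult[OF tendsto_const[of C] tendsto_norm[OF this]]
  have "((\<lambda>t. C * norm (z t)) \<longlongrightarrow> 0) (at s within {0..T})"
    by simp
  moreover have "\<forall>\<^sub>F t in at s within {0..T}. norm (norm (a t) + norm (b t)) \<le> C * norm (z t)"
    using bound by eventually_elim simp
  ultimately have ab: "((\<lambda>t. norm (a t) + norm (b t)) \<longlongrightarrow> 0) (at s within {0..T})"
    by (rule Lim_null_comparison[rotated])
  show ?thesis
  proof (rule that)
    fix t assume t: "t \<in> {0..T}"
    have "\<psi> t y = \<psi> t x + \<psi> t (y - x)"
      using linear_diff[OF linear_path[OF t], of y x] by simp
    also have "\<dots> = \<psi> t x + \<psi> t (a t) + (m + b t)"
      using dec[OF t] unfolding z_def by (simp add: algebra_simps)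
    finally show "a t \<in> L1 \<and> b t \<in> L3 \<and> \<psi> t y = \<psi> t (x + a t) + (m + b t)"
      using dec[OF t] linear_add[OF linear_path[OF t], of x "a t"] by (simp add: algebra_simps)
  next
    show "(a \<longlongrightarrow> 0) (at s within {0..T})"
      by (rule Lim_null_comparison[OF always_eventually ab]) simp
    show "(b \<longlongrightarrow> 0) (at s within {0..T})"
      by (rule Lim_null_comparison[OF always_eventually ab]) simp
  qed
qed

lemma vanishing_if_negative_before:
  assumes s: "0 < s" "s \<le> T" and before: "\<forall>t\<in>{0..<s}. positive_at t"
    and negative: "\<forall>\<^sub>F t in at_left s. a t \<in> L1 \<and> m + b t \<in> L3 \<and>
      \<psi> t (a t) + (m + b t) \<in> \<psi> t ` L2 \<and> \<omega> (m + b t) (\<psi> t (a t)) < 0"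
    and b: "(b \<longlongrightarrow> 0) (at_left s)"
  shows "m = 0"
proof -
  have "\<forall>\<^sub>F t in at_left s. t \<in> {0<..<s}"
    using s(1) by (rule eventually_at_left_real)
  with negative have "\<forall>\<^sub>F t in at_left s. b t = - m"
  proof eventually_elim
    case (elim t)
    then obtain y where "y \<in> L2" "\<psi> t y = \<psi> t (a t) + (m + b t)"
      by (metis imageE)
    moreover have "positive_at t"
      using elim(2) before by simp
    ultimately have "m + b t = 0"
      using elim(1) unfolding positive_at_iff by (meson less_imp_le)
    then show ?case
      by (simp add: eq_neg_iff_add_eq_0 add.commute)
  qed
  then have "(b \<longlongrightarrow> - m) (at_left s)"
    by (rule tendsto_eventually)
  with b have "- m = 0"
    using tendsto_unique[OF trivial_limit_at_left_real] by blast
  then show ?thesis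
    by simp
qed

lemma nonneg_if_positive_before:
  assumes s: "0 < s" "s \<le> T" and before: "\<forall>t\<in>{0..<s}. positive_at t"
  shows "triple_nonneg \<omega> (\<psi> s ` L1) (\<psi> s ` L2) L3"
  unfolding nonneg_at_iff
proof (intro ballI impI)
  fix x y m assume x: "x \<in> L1" and y: "y \<in> L2" and m: "m \<in> L3" and eq: "\<psi> s y = \<psi> s x + m"
  show "0 \<le> \<omega> m (\<psi> s x)"
  proof (rule ccontr)
    assume neg: "\<not> 0 \<le> \<omega> m (\<psi> s x)"
    have sI: "s \<in> {0..T}"
      using s by simp
    obtain a b where dec: "\<And>t. t \<in> {0..T} \<Longrightarrow> a t \<in> L1 \<and> b t \<in> L3 \<and> \<psi> t y = \<psi> t (x + a t) + (m + b t)"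
      and a: "(a \<longlongrightarrow> 0) (at s within {0..T})" and b: "(b \<longlongrightarrow> 0) (at s within {0..T})"
      using perturbed_decomposition[OF sI x y m eq] by blast
    have "\<forall>\<^sub>F t in at s within {0..T}. t \<in> {0..T}"
      by (simp add: eventually_at_filter)
    from tendsto_path_apply[OF sI this tendsto_ident_at tendsto_add[OF tendsto_const a]]
    have "((\<lambda>t. \<omega> (m + b t) (\<psi> t (x + a t))) \<longlongrightarrow> \<omega> m (\<psi> s x)) (at s within {0..T})"
      using form.tendsto[OF tendsto_add[OF tendsto_const b]] by fastforce
    then have "\<forall>\<^sub>F t in at s within {0..T}. \<omega> (m + b t) (\<psi> t (x + a t)) < 0"
      using neg by (intro order_tendstoD(2)) auto
    with \<open>\<forall>\<^sub>F t in at s within {0..T}. t \<in> {0..T}\<close>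
    have "\<forall>\<^sub>F t in at s within {0..T}. x + a t \<in> L1 \<and> m + b t \<in> L3 \<and>
        \<psi> t (x + a t) + (m + b t) \<in> \<psi> t ` L2 \<and> \<omega> (m + b t) (\<psi> t (x + a t)) < 0"
    proof eventually_elim
      case (elim t)
      note dec_t = dec[OF elim(1)]
      then have "\<psi> t (x + a t) + (m + b t) \<in> \<psi> t ` L2"
        using y by (metis image_eqI)
      then show ?case
        using dec_t elim(2) x m subspace_L1 subspace_L3 by (simp add: subspace_add)
    qed
    moreover have "(b \<longlongrightarrow> 0) (at_left s)"
      using b at_left_le_at_within_interval[OF s] by (rule tendsto_mono[rotated])
    ultimately have "m = 0"
      by (intro vanishing_if_negative_before[OF s before] filter_leD[OF at_left_le_at_within_interval[OF s]])
    then show False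
      using neg by (simp add: form.zero_left)
  qed
qed

lemma crossing_witnesses:
  assumes s: "s \<in> {0..T}" and W: "lagrangian \<omega> W" and WL: "W \<inter> \<psi> s ` L2 = {0}"
    and v: "v \<in> \<psi> s ` L2" "v \<in> L3"
  obtains a b where "\<forall>\<^sub>F t in at s within {0..T}. a t \<in> L1 \<and> v + b t \<in> L3 \<and>
      \<psi> t (a t) + (v + b t) \<in> \<psi> t ` L2 \<and>
      \<omega> (v + b t) (\<psi> t (a t)) = \<omega> v (crossing_vec W (\<lambda>t. \<psi> t ` L2) v t) + \<omega> (b t) (\<psi> t (a t))"
    "(b \<longlongrightarrow> 0) (at s within {0..T})"
    "((\<lambda>t. \<omega> (b t) (\<psi> t (a t)) / (t - s)) \<longlongrightarrow> 0) (at s within {0..T})"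
proof -
  let ?cv = "crossing_vec W (\<lambda>t. \<psi> t ` L2) v"
  obtain c where cv: "\<forall>\<^sub>F t in at s within {0..T}.
      ?cv t \<in> W \<and> v + ?cv t \<in> \<psi> t ` L2 \<and> norm (?cv t) \<le> c * \<bar>t - s\<bar>"
    by (rule crossing_vec_lipschitz[OF s lagrangian_L2 W WL v(1)])
  obtain C a b where "C > 0"
    and dec: "\<And>t. t \<in> {0..T} \<Longrightarrow> a t \<in> L1 \<and> b t \<in> L3 \<and> ?cv t = \<psi> t (a t) + b t"
    and bound: "\<forall>\<^sub>F t in at s within {0..T}. norm (a t) + norm (b t) \<le> C * norm (?cv t)"
    by (rule transversal_decomp_path[OF s, of ?cv]) (rule that)
  have "\<forall>\<^sub>F t in at s within {0..T}. t \<in> {0..T}"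
    by (simp add: eventually_at_filter)
  with cv bound have "\<forall>\<^sub>F t in at s within {0..T}. (a t \<in> L1 \<and> v + b t \<in> L3 \<and>
      \<psi> t (a t) + (v + b t) \<in> \<psi> t ` L2 \<and>
      \<omega> (v + b t) (\<psi> t (a t)) = \<omega> v (?cv t) + \<omega> (b t) (\<psi> t (a t))) \<and>
      norm (a t) \<le> (C * c) * \<bar>t - s\<bar> \<and> norm (b t) \<le> (C * c) * \<bar>t - s\<bar>"
  proof eventually_elim
    case (elim t)
    note dec_t = dec[OF elim(3)]
    have "v + b t \<in> L3"
      using dec_t v(2) subspace_L3 by (simp add: subspace_add)
    moreover have "\<psi> t (a t) + (v + b t) = v + ?cv t"
      using dec_t by (simp add: algebra_simps)
    then have "\<psi> t (a t) + (v + b t) \<in> \<psi> t ` L2"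
      using elim(1) by (simp only:)
    moreover have "\<omega> v (\<psi> t (a t)) = \<omega> v (?cv t)"
      using dec_t lagrangian_isotropic[OF lagrangian_L3 v(2), of "b t"] by (simp add: form.add_right)
    then have "\<omega> (v + b t) (\<psi> t (a t)) = \<omega> v (?cv t) + \<omega> (b t) (\<psi> t (a t))"
      by (simp add: form.add_left)
    moreover have "C * norm (?cv t) \<le> C * (c * \<bar>t - s\<bar>)"
      using elim(1) \<open>C > 0\<close> by (intro mult_left_mono) auto
    then have "norm (a t) + norm (b t) \<le> (C * c) * \<bar>t - s\<bar>"
      using elim(2) by (simp add: mult.assoc)
    then have "norm (a t) \<le> (C * c) * \<bar>t - s\<bar>" "norm (b t) \<le> (C * c) * \<bar>t - s\<bar>"
      using norm_ge_zero[of "a t"] norm_ge_zero[of "b t"] by linarith+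
    ultimately show ?case
      using dec_t by blast
  qed
  then have witnesses: "\<forall>\<^sub>F t in at s within {0..T}. a t \<in> L1 \<and> v + b t \<in> L3 \<and>
      \<psi> t (a t) + (v + b t) \<in> \<psi> t ` L2 \<and>
      \<omega> (v + b t) (\<psi> t (a t)) = \<omega> v (?cv t) + \<omega> (b t) (\<psi> t (a t))"
    and bounds: "\<forall>\<^sub>F t in at s within {0..T}.
      norm (a t) \<le> (C * c) * \<bar>t - s\<bar> \<and> norm (b t) \<le> (C * c) * \<bar>t - s\<bar>"
    by (auto elim: eventually_mono)
  have "(b \<longlongrightarrow> 0) (at s within {0..T})"
    using bounds by (intro tendsto_zero_if_linear_bound[where c = "C * c"]) (auto elim: eventually_mono)
  then show ?thesis
    using witnesses tendsto_bilinear_remainder[OF s bounds] that by blast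
qed

lemma positive_before_excludes_plus_crossing:
  assumes s: "0 < s" "s \<le> T" and before: "\<forall>t\<in>{0..<s}. positive_at t"
    and v: "v \<in> \<psi> s ` L2" "v \<in> L3" "v \<noteq> 0"
    and W: "lagrangian \<omega> W" and WL: "W \<inter> \<psi> s ` L2 = {0}" and "D > 0"
    and der: "((\<lambda>t. \<omega> v (crossing_vec W (\<lambda>t. \<psi> t ` L2) v t)) has_real_derivative D) (at s within {0..T})"
  shows False
proof -
  let ?f = "\<lambda>t. \<omega> v (crossing_vec W (\<lambda>t. \<psi> t ` L2) v t)"
  have sI: "s \<in> {0..T}"
    using s by simp
  obtain a b where wit: "\<forall>\<^sub>F t in at s within {0..T}. a t \<in> L1 \<and> v + b t \<in> L3 \<and>
      \<psi> t (a t) + (v + b t) \<in> \<psi> t ` L2 \<and> \<omega> (v + b t) (\<psi> t (a t)) = ?f t + \<omega> (b t) (\<psi> t (a t))"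
    and b: "(b \<longlongrightarrow> 0) (at s within {0..T})"
    and rest: "((\<lambda>t. \<omega> (b t) (\<psi> t (a t)) / (t - s)) \<longlongrightarrow> 0) (at s within {0..T})"
    by (rule crossing_witnesses[OF sI W WL v(1,2)])
  have "crossing_vec W (\<lambda>t. \<psi> t ` L2) v s = 0"
    using crossing_vec_unique[of W "\<lambda>t. \<psi> t ` L2" s 0 v] v(1) WL W
      lagrangian_path[OF sI lagrangian_L2] by (simp add: lagrangian_subspace subspace_0)
  then have "((\<lambda>t. ?f t / (t - s)) \<longlongrightarrow> D) (at s within {0..T})"
    using der unfolding has_field_derivative_iff by (simp add: form.zero_right)
  from tendsto_add[OF this rest]
  have "((\<lambda>t. (?f t + \<omega> (b t) (\<psi> t (a t))) / (t - s)) \<longlongrightarrow> D) (at s within {0..T})"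
    by (simp add: add_divide_distrib)
  \<comment> \<open>Since \<open>D > 0\<close>, just before s the crossing vector makes the decomposition negative.\<close>
  then have "\<forall>\<^sub>F t in at_left s. (?f t + \<omega> (b t) (\<psi> t (a t))) / (t - s) > 0"
    using \<open>D > 0\<close> at_left_le_at_within_interval[OF s]
    by (intro order_tendstoD(1) tendsto_mono[of "at_left s" "at s within {0..T}"]) auto
  moreover have "\<forall>\<^sub>F t in at_left s. t < s"
    by (simp add: eventually_at_filter)
  moreover note filter_leD[OF at_left_le_at_within_interval[OF s] wit]
  ultimately have "\<forall>\<^sub>F t in at_left s. a t \<in> L1 \<and> v + b t \<in> L3 \<and>
      \<psi> t (a t) + (v + b t) \<in> \<psi> t ` L2 \<and> \<omega> (v + b t) (\<psi> t (a t)) < 0"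
    by eventually_elim (simp add: zero_less_divide_iff)
  moreover have "(b \<longlongrightarrow> 0) (at_left s)"
    using b at_left_le_at_within_interval[OF s] by (rule tendsto_mono[rotated])
  ultimately have "v = 0"
    by (rule vanishing_if_negative_before[OF s before])
  then show False
    using v(3) by simp
qed

lemma positive_if_positive_before:
  assumes plus: "plus_curve \<omega> L3 {0..T} (\<lambda>t. \<psi> t ` L2)"
    and s: "0 < s" "s \<le> T" and before: "\<forall>t\<in>{0..<s}. positive_at t"
  shows "positive_at s"
  unfolding triple_positive_def
proof (intro ballI impI)
  fix x y m assume x: "x \<in> \<psi> s ` L1" and y: "y \<in> \<psi> s ` L2" and m: "m \<in> L3"
    and eq: "y = x + m" and "\<omega> m x \<le> 0"
  have sI: "s \<in> {0..T}"
    using s by simp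
  have nonneg: "triple_nonneg \<omega> (\<psi> s ` L1) (\<psi> s ` L2) L3"
    using nonneg_if_positive_before[OF s before] .
  then have "0 \<le> \<omega> m x"
    using x y m eq unfolding triple_nonneg_def by blast
  then have "\<omega> m x = 0"
    using \<open>\<omega> m x \<le> 0\<close> by simp
  then have m2: "m \<in> \<psi> s ` L2"
    using triple_nonneg_zero_imp_mem[OF lagrangian_path[OF sI lagrangian_L1]
        lagrangian_path[OF sI lagrangian_L2] lagrangian_L3 transversal_L1_L3[OF sI] nonneg x m
        y[unfolded eq]] by simp
  show "m = 0"
  proof (rule ccontr)
    assume "m \<noteq> 0"
    with m2 m have "\<psi> s ` L2 \<inter> L3 \<noteq> {0}"
      by blast
    from mp[OF bspec[OF plus[unfolded plus_curve_def] sI] this]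
    obtain W where W: "lagrangian \<omega> W" "W \<inter> \<psi> s ` L2 = {0}"
      and der: "\<forall>v\<in>\<psi> s ` L2 \<inter> L3. v \<noteq> 0 \<longrightarrow> (\<exists>D>0.
        ((\<lambda>t. \<omega> v (crossing_vec W (\<lambda>t. \<psi> t ` L2) v t)) has_real_derivative D) (at s within {0..T}))"
      by (elim exE conjE)
    obtain D where "D > 0"
      and der_m: "((\<lambda>t. \<omega> m (crossing_vec W (\<lambda>t. \<psi> t ` L2) m t)) has_real_derivative D)
        (at s within {0..T})"
      using der[rule_format, OF IntI[OF m2 m] \<open>m \<noteq> 0\<close>] by (elim exE conjE)
    show False
      using positive_before_excludes_plus_crossing[OF s before m2 m \<open>m \<noteq> 0\<close> W(1,2) \<open>D > 0\<close> der_m] .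
  qed
qed

end

theorem corollary4p3:
  fixes \<omega> :: "'v::euclidean_space \<Rightarrow> 'v \<Rightarrow> real"
    and n :: nat and T :: real
    and L1 L2 L3 :: "'v set"
    and \<psi> :: "real \<Rightarrow> 'v \<Rightarrow> 'v"
  assumes symp: "symplectic_form \<omega>"
    and dimV: "DIM('v) = 2 * n"
    and lag1: "lagrangian \<omega> L1" and lag2: "lagrangian \<omega> L2" and lag3: "lagrangian \<omega> L3"
    and psi_sp: "\<forall>t\<in>{0..T}. symplectic_map \<omega> (\<psi> t)"
    and psi_C1: "C1_path_on {0..T} \<psi>"
    and psi0: "\<psi> 0 = id"
    and plus: "plus_curve \<omega> L3 {0..T} (\<lambda>t. \<psi> t ` L2)"
    and idx: "triple_index \<omega> L1 L2 L3 = n - dim (L1 \<inter> L2)"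
    and transv: "\<forall>t\<in>{0..T}. \<psi> t ` L1 \<inter> L3 = {0}"
  shows "\<forall>t\<in>{0..T}. \<psi> t ` L2 \<inter> L3 = {0}"
proof (cases "0 \<le> T")
  case False
  then show ?thesis
    by simp
next
  case True
  interpret lagrangian_triple_path \<omega> T \<psi> L1 L2 L3
    by unfold_locales (use symp psi_sp psi_C1 lag1 lag2 lag3 transv in auto)
  have "\<psi> 0 ` L1 \<inter> L3 = {0}"
    using transv True by simp
  then have "positive_at 0"
    using triple_index_imp_triple_positive[OF dimV lag1 lag2 lag3 _ idx] psi0 by simp
  then have positive: "\<forall>t\<in>{0..T}. positive_at t"
    using positive_at_eventually positive_if_positive_before[OF plus]
    by (rule interval_continuity_induct)
  show ?thesis
  proof
    fix t assume t: "t \<in> {0..T}"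
    show "\<psi> t ` L2 \<inter> L3 = {0}"
      using triple_positive_imp_transversal[OF positive[rule_format, OF t]] lagrangian_path[OF t]
        lagrangian_subspace lag1 lag2 lag3 by metis
  qed
qed

end
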